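(* Let $f:(X,P,\varphi_X)\to(Y,Q,\varphi_Y)$ be a stratified map such that $\widehat f=\alpha:P\to Q$ is an isomorphism of posets. Then the filtered map $f^\triangleleft:(X,P,\varphi_X)\to(Y\times_QP,P,\alpha^*\varphi_Y)$, $x\mapsto(f(x),\varphi_X(x))$, is a weak-equivalence in $\mathrm{Top}_P$ if and only if $f$ induces an isomorphism $s\pi_0(f):s\pi_0(X,P,\varphi_X)\to s\pi_0(Y,Q,\varphi_Y)\circ\widehat f$ and isomorphisms $s\pi_n(f):s\pi_n((X,P,\varphi_X),\phi)\to s\pi_n((Y,Q,\varphi_Y),f\circ\phi)\circ\widehat f$ for every pointing $\phi$ of $(X,P,\varphi_X)$ and every $n\geq1$.
   Context: $\mathrm{Top}$ is the category of $\Delta$-generated spaces. A stratified space is $(X,P,\varphi_X)$ with $P$ a poset and $\varphi_X:X\to P$ continuous for the Alexandrov topology; a stratified map is a continuous $f:X\to Y$ with an order-preserving $\widehat f:P\to Q$ such that $\varphi_Y\circ f=\widehat f\circ\varphi_X$. $\mathrm{Top}_P$ is the subcategory over fixed $P$ with $\widehat f=\mathrm{Id}_P$. $Y\times_QP$ is the pullback of $\varphi_Y$ and $\alpha$, with $\alpha^*\varphi_Y$ the projection to $P$. $\varphi_P:\|N(P)\|\to P$ sends $(\{p_0<\dots<p_n\},t)$, $t$ interior, to $p_n$; for a nondegenerate simplex $\varphi:\Delta^n\hookrightarrow N(P)$ (written $\Delta^\varphi$), $\|\Delta^\varphi\|_P=(\|\Delta^n\|,\varphi_P\circ\|\varphi\|)$,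 and $\mathcal C^0_P(A,X)$ is the space of filtered maps. Weak-equivalences in $\mathrm{Top}_P$: $g:X\to X'$ such that for every nondegenerate $\Delta^\varphi$, $\mathrm{Sing}\,\mathcal C^0_{N(P)}(\|\Delta^\varphi\|_{N(P)},g\times_P\|N(P)\|)$ is a weak equivalence of simplicial sets (here $X\times_P\|N(P)\|$ is the pullback along $\varphi_P$, $\|\Delta^\varphi\|_{N(P)}=(\|\Delta^n\|,\|\varphi\|)$ and $\mathcal C^0_{N(P)}$ the space of maps over $\|N(P)\|$). $s\pi_0(X,P,\varphi_X)$ is the functor on nondegenerate simplices (opposite inclusion order) $\Delta^\psi\mapsto\pi_0\mathcal C^0_P(\|\Delta^\psi\|_P,X)$. A pointing is a filtered map $\phi:\|\Delta^\varphi\|_P\to X$; $s\pi_n((X,P,\varphi_X),\phi)$, $n\ge1$, is the functor on faces $\Delta^\psi\subseteq\Delta^\varphi$ (opposite) given by $\pi_n(\mathcal C^0_P(\|\Delta^\psi\|_P,X),\phi|_{\|\Delta^\psi\|_P})$. $f\circ\phi$ is the pointing $\|\Delta^{\widehat f\circ\varphi}\|_Q\to Y$; $s\pi_n(Y,f\circ\phi)\circ\widehat f$ and $s\pi_0(Y)\circ\widehat f$ are the functors $\Delta^\psi\mapsto s\pi_n(Y,f\circ\phi)(\Delta^{\widehat f\circ\psi})$, resp. $s\pi_0(Y)(\Delta^{\widehat f\circ\psi})$, and $s\pi_n(f)$ is induced by postcomposition with $f$. *)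

theory Defs
  imports "HOL-Analysis.Analysis" "HOL-Homology.Simplices"
begin

definition simplex_top :: "nat \<Rightarrow> (nat \<Rightarrow> real) topology" where
  "simplex_top n = subtopology (powertop_real UNIV) (standard_simplex n)"

text \<open>Delta-ification: a set is open iff its preimage under every continuous map
  from a topological simplex is open.\<close>
definition dgen :: "'a topology \<Rightarrow> 'a topology" where
  "dgen T = topology (\<lambda>U. U \<subseteq> topspace T \<and>
     (\<forall>n \<sigma>. continuous_map (simplex_top n) T \<sigma> \<longrightarrow>
        openin (simplex_top n) {s \<in> topspace (simplex_top n). \<sigma> s \<in> U}))"

definition delta_generated :: "'a topology \<Rightarrow> bool" where
  "delta_generated T \<longleftrightarrow> dgen T = T"

text \<open>Alexandrov topology of the poset P (opens = upward closed subsets); this is the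
  convention making \<open>\<phi>\<^sub>P\<close> (sending an open simplex to its maximal vertex) continuous.\<close>
definition alex :: "'p::order set \<Rightarrow> 'p topology" where
  "alex P = topology (\<lambda>U. U \<subseteq> P \<and> (\<forall>x\<in>U. \<forall>y\<in>P. x \<le> y \<longrightarrow> y \<in> U))"

definition stratified :: "'a topology \<Rightarrow> 'p::order set \<Rightarrow> ('a \<Rightarrow> 'p) \<Rightarrow> bool" where
  "stratified X P \<phi> \<longleftrightarrow> delta_generated X \<and> \<phi> \<in> topspace X \<rightarrow> P \<and>
     continuous_map X (alex P) \<phi>"

definition poset_iso :: "'p::order set \<Rightarrow> 'q::order set \<Rightarrow> ('p \<Rightarrow> 'q) \<Rightarrow> bool" where
  "poset_iso P Q \<alpha> \<longleftrightarrow> bij_betw \<alpha> P Q \<and> (\<forall>x\<in>P. \<forall>y\<in>P. x \<le> y \<longleftrightarrow> \<alpha> x \<le> \<alpha> y)"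

definition stratified_map ::
  "'a topology \<Rightarrow> 'p::order set \<Rightarrow> ('a \<Rightarrow> 'p) \<Rightarrow> 'b topology \<Rightarrow> 'q::order set \<Rightarrow> ('b \<Rightarrow> 'q)
   \<Rightarrow> ('a \<Rightarrow> 'b) \<Rightarrow> ('p \<Rightarrow> 'q) \<Rightarrow> bool" where
  "stratified_map X P \<phi>X Y Q \<phi>Y f \<alpha> \<longleftrightarrow> continuous_map X Y f \<and> \<alpha> \<in> P \<rightarrow> Q \<and>
     (\<forall>x\<in>P. \<forall>y\<in>P. x \<le> y \<longrightarrow> \<alpha> x \<le> \<alpha> y) \<and> (\<forall>x\<in>topspace X. \<phi>Y (f x) = \<alpha> (\<phi>X x))"

definition nd_simplex :: "'p::order set \<Rightarrow> nat \<Rightarrow> (nat \<Rightarrow> 'p) \<Rightarrow> bool" where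
  "nd_simplex P n c \<longleftrightarrow> (\<forall>i\<le>n. c i \<in> P) \<and> (\<forall>i j. i < j \<longrightarrow> j \<le> n \<longrightarrow> c i < c j)"

definition face :: "nat \<Rightarrow> nat \<Rightarrow> (nat \<Rightarrow> nat) \<Rightarrow> bool" where
  "face k m d \<longleftrightarrow> (\<forall>i\<le>k. d i \<le> m) \<and> (\<forall>i j. i < j \<longrightarrow> j \<le> k \<longrightarrow> d i < d j)"

text \<open>Affine map of a simplex induced by a vertex map (used for \<open>\<parallel>\<phi>\<parallel>\<close> and face maps).\<close>
definition push :: "(nat \<Rightarrow> 'v) \<Rightarrow> nat \<Rightarrow> (nat \<Rightarrow> real) \<Rightarrow> ('v \<Rightarrow> real)" where
  "push c n s = (\<lambda>v. \<Sum>i\<in>{i. i \<le> n \<and> c i = v}. s i)"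

text \<open>Points of the realization \<open>\<parallel>N(P)\<parallel>\<close>: barycentric coordinates supported on a finite
  nonempty chain of P.\<close>
definition nerve_pts :: "'p::order set \<Rightarrow> ('p \<Rightarrow> real) set" where
  "nerve_pts P = {t. (\<forall>p. 0 \<le> t p) \<and> finite {p. t p \<noteq> 0} \<and> {p. t p \<noteq> 0} \<subseteq> P \<and>
     (\<forall>p q. t p \<noteq> 0 \<longrightarrow> t q \<noteq> 0 \<longrightarrow> p \<le> q \<or> q \<le> p) \<and> (\<Sum>p\<in>{p. t p \<noteq> 0}. t p) = 1}"

definition nerve_top :: "'p::order set \<Rightarrow> ('p \<Rightarrow> real) topology" where
  "nerve_top P = topology (\<lambda>U. U \<subseteq> nerve_pts P \<and>
     (\<forall>n c. nd_simplex P n c \<longrightarrow>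
        openin (simplex_top n) {s \<in> standard_simplex n. push c n s \<in> U}))"

definition nerve_strat :: "('p::order \<Rightarrow> real) \<Rightarrow> 'p" where
  "nerve_strat t = (THE p. t p \<noteq> 0 \<and> (\<forall>q. t q \<noteq> 0 \<longrightarrow> q \<le> p))"

definition pullback_top ::
  "'a topology \<Rightarrow> ('a \<Rightarrow> 'c) \<Rightarrow> 'b topology \<Rightarrow> ('b \<Rightarrow> 'c) \<Rightarrow> ('a \<times> 'b) topology" where
  "pullback_top T \<phi> S \<psi> = dgen (subtopology (prod_topology T S)
      {(x, y). x \<in> topspace T \<and> y \<in> topspace S \<and> \<phi> x = \<psi> y})"

definition compact_open :: "'a topology \<Rightarrow> 'b topology \<Rightarrow> ('a \<Rightarrow> 'b) topology" where
  "compact_open A X = subtopology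
     (topology_generated_by
        {{g \<in> extensional (topspace A). g ` K \<subseteq> U} | K U. compactin A K \<and> openin X U})
     {g \<in> extensional (topspace A). continuous_map A X g}"

definition map_space ::
  "'x topology \<Rightarrow> ('x \<Rightarrow> 'c) \<Rightarrow> 'a topology \<Rightarrow> ('a \<Rightarrow> 'c) \<Rightarrow> ('x \<Rightarrow> 'a) topology" where
  "map_space A \<phi>A X \<phi>X = dgen (subtopology (compact_open A X)
      {g. \<forall>s\<in>topspace A. \<phi>X (g s) = \<phi>A s})"

text \<open>\<open>C\<^sup>0\<^sub>P(\<parallel>\<Delta>\<^sup>c\<parallel>\<^sub>P, X)\<close> with \<open>\<parallel>\<Delta>\<^sup>c\<parallel>\<^sub>P = (\<parallel>\<Delta>\<^sup>n\<parallel>, \<phi>\<^sub>P \<circ> \<parallel>c\<parallel>)\<close>.\<close>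
definition CP :: "nat \<Rightarrow> (nat \<Rightarrow> 'p::order) \<Rightarrow> 'a topology \<Rightarrow> ('a \<Rightarrow> 'p)
    \<Rightarrow> ((nat \<Rightarrow> real) \<Rightarrow> 'a) topology" where
  "CP n c X \<phi>X = map_space (simplex_top n) (\<lambda>s. nerve_strat (push c n s)) X \<phi>X"

definition CN :: "'p::order set \<Rightarrow> nat \<Rightarrow> (nat \<Rightarrow> 'p) \<Rightarrow> 'a topology \<Rightarrow> ('a \<Rightarrow> 'p)
    \<Rightarrow> ((nat \<Rightarrow> real) \<Rightarrow> 'a \<times> ('p \<Rightarrow> real)) topology" where
  "CN P n c X \<phi>X = map_space (simplex_top n) (push c n)
      (pullback_top X \<phi>X (nerve_top P) nerve_strat) snd"

definition postcomp :: "'x topology \<Rightarrow> ('a \<Rightarrow> 'b) \<Rightarrow> ('x \<Rightarrow> 'a) \<Rightarrow> ('x \<Rightarrow> 'b)" where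
  "postcomp A f g = restrict (f \<circ> g) (topspace A)"

definition cube_top :: "nat \<Rightarrow> (nat \<Rightarrow> real) topology" where
  "cube_top n = subtopology (powertop_real UNIV)
     {x. (\<forall>i<n. 0 \<le> x i \<and> x i \<le> 1) \<and> (\<forall>i\<ge>n. x i = 0)}"

definition cube_bdry :: "nat \<Rightarrow> (nat \<Rightarrow> real) set" where
  "cube_bdry n = {x \<in> topspace (cube_top n). \<exists>i<n. x i = 0 \<or> x i = 1}"

definition sph_map :: "nat \<Rightarrow> 'a topology \<Rightarrow> 'a \<Rightarrow> ((nat \<Rightarrow> real) \<Rightarrow> 'a) \<Rightarrow> bool" where
  "sph_map n T x0 h \<longleftrightarrow> continuous_map (cube_top n) T h \<and> h ` cube_bdry n \<subseteq> {x0}"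

definition rel_homotopic ::
  "nat \<Rightarrow> 'a topology \<Rightarrow> 'a \<Rightarrow> ((nat \<Rightarrow> real) \<Rightarrow> 'a) \<Rightarrow> ((nat \<Rightarrow> real) \<Rightarrow> 'a) \<Rightarrow> bool" where
  "rel_homotopic n T x0 h1 h2 \<longleftrightarrow>
     homotopic_with (\<lambda>h. h ` cube_bdry n \<subseteq> {x0}) (cube_top n) T
       (restrict h1 (topspace (cube_top n))) (restrict h2 (topspace (cube_top n)))"

definition pin_bij :: "nat \<Rightarrow> 'a topology \<Rightarrow> 'b topology \<Rightarrow> ('a \<Rightarrow> 'b) \<Rightarrow> 'a \<Rightarrow> bool" where
  "pin_bij n T T' h x0 \<longleftrightarrow>
     (\<forall>g'. sph_map n T' (h x0) g' \<longrightarrow>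
        (\<exists>g. sph_map n T x0 g \<and> rel_homotopic n T' (h x0) (h \<circ> g) g')) \<and>
     (\<forall>g1 g2. sph_map n T x0 g1 \<longrightarrow> sph_map n T x0 g2 \<longrightarrow>
        rel_homotopic n T' (h x0) (h \<circ> g1) (h \<circ> g2) \<longrightarrow> rel_homotopic n T x0 g1 g2)"

definition pi0_bij :: "'a topology \<Rightarrow> 'b topology \<Rightarrow> ('a \<Rightarrow> 'b) \<Rightarrow> bool" where
  "pi0_bij T T' h \<longleftrightarrow>
     bij_betw (\<lambda>C. path_component_of_set T' (h (SOME x. x \<in> C)))
       (path_components_of T) (path_components_of T')"

definition weak_homotopy_equiv :: "'a topology \<Rightarrow> 'b topology \<Rightarrow> ('a \<Rightarrow> 'b) \<Rightarrow> bool" where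
  "weak_homotopy_equiv T T' h \<longleftrightarrow> pi0_bij T T' h \<and>
     (\<forall>x0\<in>topspace T. \<forall>n\<ge>1. pin_bij n T T' h x0)"

definition weq_TopP :: "'p::order set \<Rightarrow> 'a topology \<Rightarrow> ('a \<Rightarrow> 'p) \<Rightarrow> 'b topology \<Rightarrow> ('b \<Rightarrow> 'p)
    \<Rightarrow> ('a \<Rightarrow> 'b) \<Rightarrow> bool" where
  "weq_TopP P X \<phi>X X' \<phi>X' g \<longleftrightarrow>
     (\<forall>n c. nd_simplex P n c \<longrightarrow>
        weak_homotopy_equiv (CN P n c X \<phi>X) (CN P n c X' \<phi>X')
          (postcomp (simplex_top n) (\<lambda>(x, t). (g x, t))))"

definition spi0_iso :: "'p::order set \<Rightarrow> 'a topology \<Rightarrow> ('a \<Rightarrow> 'p)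
    \<Rightarrow> 'b topology \<Rightarrow> ('b \<Rightarrow> 'q::order) \<Rightarrow> ('a \<Rightarrow> 'b) \<Rightarrow> ('p \<Rightarrow> 'q) \<Rightarrow> bool" where
  "spi0_iso P X \<phi>X Y \<phi>Y f \<alpha> \<longleftrightarrow>
     (\<forall>n c. nd_simplex P n c \<longrightarrow>
        pi0_bij (CP n c X \<phi>X) (CP n (\<alpha> \<circ> c) Y \<phi>Y) (postcomp (simplex_top n) f))"

text \<open>For every pointing \<open>\<phi> : \<parallel>\<Delta>\<^sup>c\<parallel>\<^sub>P \<rightarrow> X\<close> and every k \<ge> 1,
  \<open>s\<pi>\<^sub>k(f) : s\<pi>\<^sub>k(X,\<phi>) \<rightarrow> s\<pi>\<^sub>k(Y, f\<circ>\<phi>) \<circ> f\<^sup>^\<close> is an isomorphism, i.e. bijective at every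
  face \<open>c \<circ> d\<close> of c.\<close>
definition spin_iso :: "'p::order set \<Rightarrow> 'a topology \<Rightarrow> ('a \<Rightarrow> 'p)
    \<Rightarrow> 'b topology \<Rightarrow> ('b \<Rightarrow> 'q::order) \<Rightarrow> ('a \<Rightarrow> 'b) \<Rightarrow> ('p \<Rightarrow> 'q) \<Rightarrow> bool" where
  "spin_iso P X \<phi>X Y \<phi>Y f \<alpha> \<longleftrightarrow>
     (\<forall>m c \<phi>. nd_simplex P m c \<longrightarrow> \<phi> \<in> topspace (CP m c X \<phi>X) \<longrightarrow>
        (\<forall>k d. face k m d \<longrightarrow> (\<forall>n\<ge>1.
           pin_bij n (CP k (c \<circ> d) X \<phi>X) (CP k (\<alpha> \<circ> c \<circ> d) Y \<phi>Y)
             (postcomp (simplex_top k) f)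
             (restrict (\<phi> \<circ> push d k) (topspace (simplex_top k))))))"

end

theory Submission
  imports Defs
begin

text \<open>Both sides of the equivalence are statements about the filtered mapping spaces
  \<open>C\<^sup>0\<^sub>P(\<parallel>\<Delta>\<^sup>c\<parallel>\<^sub>P, -)\<close>. A map \<open>\<parallel>\<Delta>\<^sup>n\<parallel> \<rightarrow> X \<times>\<^sub>P \<parallel>N(P)\<parallel>\<close> over \<open>\<parallel>c\<parallel>\<close> is the same thing as a filtered
  map \<open>\<parallel>\<Delta>\<^sup>c\<parallel>\<^sub>P \<rightarrow> X\<close>, and this identification is a homeomorphism of mapping spaces, natural in
  \<open>X\<close>; hence a map in \<open>Top\<^sub>P\<close> is a weak equivalence iff it induces weak homotopy equivalences
  on all \<open>C\<^sup>0\<^sub>P(\<parallel>\<Delta>\<^sup>c\<parallel>\<^sub>P, -)\<close>. Since \<open>\<alpha>\<close> is an isomorphism, filtered maps into \<open>Y \<times>\<^sub>Q P\<close> over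
  \<open>\<phi>\<^sub>P \<circ> \<parallel>c\<parallel>\<close> are in the same way maps into \<open>Y\<close> over \<open>\<phi>\<^sub>Q \<circ> \<parallel>\<alpha> \<circ> c\<parallel>\<close>, which turns
  \<open>C\<^sup>0\<^sub>P(\<parallel>\<Delta>\<^sup>c\<parallel>\<^sub>P, f\<^sup>\<triangleleft>)\<close> into \<open>C\<^sup>0\<^sub>Q(\<parallel>\<Delta>\<^bsup>\<alpha> \<circ> c\<^esup>\<parallel>\<^sub>Q, f)\<close>. Finally, these maps being weak homotopy
  equivalences for all \<open>c\<close> is exactly the bijectivity of \<open>s\<pi>\<^sub>0(f)\<close> and of all \<open>s\<pi>\<^sub>n(f)\<close>.

  Continuity of the identifications rests on the exponential law for the compact simplex and
  on \<open>\<Delta>\<^sup>N \<times> \<Delta>\<^sup>n\<close> being a retract of a simplex, hence Delta-generated.\<close>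

section \<open>Delta-generated spaces and the Alexandrov topology\<close>

lemma openin_dgen:
  "openin (dgen T) U \<longleftrightarrow> U \<subseteq> topspace T \<and>
     (\<forall>n \<sigma>. continuous_map (simplex_top n) T \<sigma> \<longrightarrow>
        openin (simplex_top n) {s \<in> topspace (simplex_top n). \<sigma> s \<in> U})"
proof -
  have Int: "{s \<in> topspace (simplex_top n). \<sigma> s \<in> U \<inter> V} =
      {s \<in> topspace (simplex_top n). \<sigma> s \<in> U} \<inter> {s \<in> topspace (simplex_top n). \<sigma> s \<in> V}"
    for n \<sigma> U V by auto
  have Union: "{s \<in> topspace (simplex_top n). \<sigma> s \<in> \<Union>K} =
      (\<Union>U\<in>K. {s \<in> topspace (simplex_top n). \<sigma> s \<in> U})" for n \<sigma> K
    by auto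
  have "istopology (\<lambda>U. U \<subseteq> topspace T \<and>
     (\<forall>n \<sigma>. continuous_map (simplex_top n) T \<sigma> \<longrightarrow>
        openin (simplex_top n) {s \<in> topspace (simplex_top n). \<sigma> s \<in> U}))"
    unfolding istopology_def Int Union by (auto intro!: openin_Union)
  then show ?thesis
    unfolding dgen_def by (simp add: topology_inverse')
qed

lemma openin_imp_openin_dgen: "openin T U \<Longrightarrow> openin (dgen T) U"
  unfolding openin_dgen by (simp add: openin_subset openin_continuous_map_preimage)

lemma topspace_dgen [simp]: "topspace (dgen T) = topspace T"
proof
  show "topspace (dgen T) \<subseteq> topspace T"
    by (meson openin_dgen openin_topspace)
  show "topspace T \<subseteq> topspace (dgen T)"
    using openin_imp_openin_dgen[OF openin_topspace[of T]] openin_subset by blast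
qed

lemma continuous_map_dgen_id: "continuous_map (dgen T) T (\<lambda>x. x)"
  unfolding continuous_map_def
proof (intro conjI allI impI)
  fix U assume U: "openin T U"
  then have "{x \<in> topspace (dgen T). x \<in> U} = U" using openin_subset by auto
  then show "openin (dgen T) {x \<in> topspace (dgen T). x \<in> U}"
    using openin_imp_openin_dgen[OF U] by simp
qed simp

lemma continuous_map_dgen:
  assumes "\<And>x. x \<in> topspace A \<Longrightarrow> \<Phi> x \<in> topspace B"
    and "\<And>n \<sigma>. continuous_map (simplex_top n) A \<sigma> \<Longrightarrow>
           continuous_map (simplex_top n) B (\<Phi> \<circ> \<sigma>)"
  shows "continuous_map (dgen A) (dgen B) \<Phi>"
  unfolding continuous_map_def
proof (intro conjI allI impI)
  show "\<Phi> \<in> topspace (dgen A) \<rightarrow> topspace (dgen B)" using assms(1) by auto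
  fix V assume V: "openin (dgen B) V"
  show "openin (dgen A) {x \<in> topspace (dgen A). \<Phi> x \<in> V}"
    unfolding openin_dgen
  proof (intro conjI allI impI)
    fix n \<sigma> assume \<sigma>: "continuous_map (simplex_top n) A \<sigma>"
    have "{s \<in> topspace (simplex_top n). \<sigma> s \<in> {x \<in> topspace (dgen A). \<Phi> x \<in> V}}
        = {s \<in> topspace (simplex_top n). (\<Phi> \<circ> \<sigma>) s \<in> V}"
      using \<sigma> by (auto simp: continuous_map_def)
    moreover have "openin (simplex_top n) {s \<in> topspace (simplex_top n). (\<Phi> \<circ> \<sigma>) s \<in> V}"
      using V assms(2)[OF \<sigma>] unfolding openin_dgen by blast
    ultimately show "openin (simplex_top n)
        {s \<in> topspace (simplex_top n). \<sigma> s \<in> {x \<in> topspace (dgen A). \<Phi> x \<in> V}}"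
      by simp
  qed auto
qed

lemma continuous_map_dgen_dgen:
  "continuous_map A B \<Phi> \<Longrightarrow> continuous_map (dgen A) (dgen B) \<Phi>"
  by (rule continuous_map_dgen)
     (auto intro: continuous_map_compose dest: continuous_map_image_subset_topspace)

lemma homeomorphic_maps_dgen:
  assumes \<Phi>: "\<And>n \<sigma>. continuous_map (simplex_top n) A \<sigma> \<Longrightarrow>
               continuous_map (simplex_top n) B (\<Phi> \<circ> \<sigma>)"
    and \<Psi>: "\<And>n \<sigma>. continuous_map (simplex_top n) B \<sigma> \<Longrightarrow>
               continuous_map (simplex_top n) A (\<Psi> \<circ> \<sigma>)"
    and "\<And>x. x \<in> topspace A \<Longrightarrow> \<Psi> (\<Phi> x) = x"
    and "\<And>y. y \<in> topspace B \<Longrightarrow> \<Phi> (\<Psi> y) = y"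
  shows "homeomorphic_maps (dgen A) (dgen B) \<Phi> \<Psi>"
proof -
  obtain s0 where s0: "s0 \<in> topspace (simplex_top 0)"
    using nonempty_standard_simplex by (auto simp: simplex_top_def)
  have \<Phi>B: "\<Phi> x \<in> topspace B" if "x \<in> topspace A" for x
    using continuous_map_image_subset_topspace[OF \<Phi>[of 0 "\<lambda>_. x"]] that s0 by auto
  have \<Psi>A: "\<Psi> y \<in> topspace A" if "y \<in> topspace B" for y
    using continuous_map_image_subset_topspace[OF \<Psi>[of 0 "\<lambda>_. y"]] that s0 by auto
  show ?thesis
    unfolding homeomorphic_maps_def
    using continuous_map_dgen[of A \<Phi> B, OF \<Phi>B \<Phi>] continuous_map_dgen[of B \<Psi> A, OF \<Psi>A \<Psi>] assms(3,4)
    by simp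
qed

text \<open>A retract of a simplex is Delta-generated.\<close>
lemma continuous_map_into_dgen_of_retract:
  assumes r: "continuous_map K (simplex_top m) r"
    and e: "continuous_map (simplex_top m) K e"
    and er: "\<And>x. x \<in> topspace K \<Longrightarrow> e (r x) = x"
    and H: "continuous_map K Z H"
  shows "continuous_map K (dgen Z) H"
  unfolding continuous_map_def
proof (intro conjI allI impI)
  show "H \<in> topspace K \<rightarrow> topspace (dgen Z)" using H by (auto simp: continuous_map_def)
  fix V assume "openin (dgen Z) V"
  then have "openin (simplex_top m) {t \<in> topspace (simplex_top m). (H \<circ> e) t \<in> V}"
    using continuous_map_compose[OF e H] unfolding openin_dgen by blast
  then have "openin K {x \<in> topspace K. r x \<in> {t \<in> topspace (simplex_top m). (H \<circ> e) t \<in> V}}"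
    by (rule openin_continuous_map_preimage[OF r])
  moreover have "{x \<in> topspace K. r x \<in> {t \<in> topspace (simplex_top m). (H \<circ> e) t \<in> V}}
      = {x \<in> topspace K. H x \<in> V}"
    using er r by (auto simp: continuous_map_def)
  ultimately show "openin K {x \<in> topspace K. H x \<in> V}" by simp
qed

lemma openin_alex:
  "openin (alex P) U \<longleftrightarrow> U \<subseteq> P \<and> (\<forall>x\<in>U. \<forall>y\<in>P. x \<le> y \<longrightarrow> y \<in> U)"
proof -
  have "istopology (\<lambda>U. U \<subseteq> P \<and> (\<forall>x\<in>U. \<forall>y\<in>P. x \<le> y \<longrightarrow> y \<in> U))"
    unfolding istopology_def by blast
  then show ?thesis
    unfolding alex_def by (simp add: topology_inverse')
qed

lemma topspace_alex [simp]: "topspace (alex P) = P"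
  by (meson openin_alex openin_subset openin_topspace order_refl subset_antisym)

section \<open>The realization of the nerve\<close>

lemma topspace_simplex_top [simp]: "topspace (simplex_top n) = standard_simplex n"
  by (simp add: simplex_top_def)

lemma continuous_map_simplex_coordinate:
  "continuous_map (simplex_top n) euclideanreal (\<lambda>s. s i)"
  unfolding simplex_top_def
  by (rule continuous_map_from_subtopology)
     (use continuous_map_product_projection[of i UNIV "\<lambda>i. euclideanreal"] in simp)

lemma openin_simplex_coordinate_pos:
  "openin (simplex_top n) {s \<in> standard_simplex n. 0 < s i}"
  using openin_continuous_map_preimage[OF continuous_map_simplex_coordinate, of "{0<..}" n i]
  by simp

lemma openin_nerve_top:
  "openin (nerve_top P) U \<longleftrightarrow> U \<subseteq> nerve_pts P \<and>
     (\<forall>n c. nd_simplex P n c \<longrightarrow>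
        openin (simplex_top n) {s \<in> standard_simplex n. push c n s \<in> U})"
proof -
  have Int: "{s \<in> standard_simplex n. push c n s \<in> U \<inter> V} =
      {s \<in> standard_simplex n. push c n s \<in> U} \<inter> {s \<in> standard_simplex n. push c n s \<in> V}"
    for n c U V by auto
  have Union: "{s \<in> standard_simplex n. push c n s \<in> \<Union>K} =
      (\<Union>U\<in>K. {s \<in> standard_simplex n. push c n s \<in> U})" for n c K
    by auto
  have "istopology (\<lambda>U. U \<subseteq> nerve_pts P \<and>
     (\<forall>n c. nd_simplex P n c \<longrightarrow>
        openin (simplex_top n) {s \<in> standard_simplex n. push c n s \<in> U}))"
    unfolding istopology_def Int Union by (auto intro!: openin_Union)
  then show ?thesis
    unfolding nerve_top_def by (simp add: topology_inverse')
qed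

lemma nd_simplex_imp_strict_mono_on: "nd_simplex P n c \<Longrightarrow> strict_mono_on {..n} c"
  by (auto simp: nd_simplex_def strict_mono_on_def)

lemma nd_simplex_face:
  assumes "nd_simplex P m c" "face k m d" shows "nd_simplex P k (c \<circ> d)"
  using assms unfolding nd_simplex_def face_def
  by (metis comp_apply order_le_less_trans le_less)

lemma push_nonneg: "s \<in> standard_simplex n \<Longrightarrow> 0 \<le> push c n s v"
  unfolding push_def by (rule sum_nonneg) (simp add: standard_simplex_def)

lemma push_vertex:
  fixes c :: "nat \<Rightarrow> 'p::order"
  assumes "strict_mono_on {..n} c" "i \<le> n" shows "push c n s (c i) = s i"
proof -
  have "{j. j \<le> n \<and> c j = c i} = {i}"
    using inj_onD[OF strict_mono_on_imp_inj_on[OF assms(1)]] assms(2) by fastforce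
  then show ?thesis by (simp add: push_def)
qed

lemma push_nonzero_imp_vertex:
  assumes "push c n s v \<noteq> 0" shows "\<exists>j\<le>n. v = c j"
proof (rule ccontr)
  assume "\<not> (\<exists>j\<le>n. v = c j)"
  then have "{j. j \<le> n \<and> c j = v} = {}" by auto
  then have "push c n s v = 0" unfolding push_def by (simp only: sum.empty)
  with assms show False by simp
qed

lemma sum_push_vertices: "(\<Sum>v \<in> c ` {..n}. push c n s v) = (\<Sum>i\<le>n. s i)"
  unfolding push_def using sum.group[of "{..n}" "c ` {..n}" c s] by (simp add: atMost_def)

lemma push_id:
  assumes "s \<in> standard_simplex m" shows "push id m s = s"
proof
  fix v
  show "push id m s v = s v"
  proof (cases "v \<le> m")
    case True
    then have "{i. i \<le> m \<and> id i = v} = {v}" by auto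
    then show ?thesis by (simp add: push_def)
  next
    case False
    then have "{i. i \<le> m \<and> id i = v} = {}" by auto
    then show ?thesis using assms False by (simp add: push_def standard_simplex_def)
  qed
qed

definition max_support :: "nat \<Rightarrow> (nat \<Rightarrow> real) \<Rightarrow> nat" where
  "max_support n s = Max {i. i \<le> n \<and> s i \<noteq> 0}"

lemma max_support:
  assumes "s \<in> standard_simplex n"
  shows "max_support n s \<le> n" "0 < s (max_support n s)"
    and "\<And>j. j \<le> n \<Longrightarrow> s j \<noteq> 0 \<Longrightarrow> j \<le> max_support n s"
proof -
  have "{i. i \<le> n \<and> s i \<noteq> 0} \<noteq> {}"
  proof
    assume "{i. i \<le> n \<and> s i \<noteq> 0} = {}"
    then have "(\<Sum>i\<le>n. s i) = 0" by (intro sum.neutral) auto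
    then show False using assms by (simp add: standard_simplex_def)
  qed
  then have "max_support n s \<in> {i. i \<le> n \<and> s i \<noteq> 0}"
    unfolding max_support_def by (intro Max_in) auto
  then show "max_support n s \<le> n" "0 < s (max_support n s)"
    using assms by (auto simp: standard_simplex_def less_le)
  show "\<And>j. j \<le> n \<Longrightarrow> s j \<noteq> 0 \<Longrightarrow> j \<le> max_support n s"
    unfolding max_support_def by (intro Max_ge) auto
qed

lemma nerve_strat_eqI:
  assumes "t p \<noteq> 0" "\<And>q. t q \<noteq> 0 \<Longrightarrow> q \<le> p"
  shows "nerve_strat t = (p::'p::order)"
  unfolding nerve_strat_def
  by (rule the_equality) (use assms in \<open>auto intro: order.antisym\<close>)

lemma nerve_strat_push:
  assumes c: "strict_mono_on {..n} c" and s: "s \<in> standard_simplex n"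
  shows "nerve_strat (push c n s) = c (max_support n s)"
proof (rule nerve_strat_eqI)
  show "push c n s (c (max_support n s)) \<noteq> 0"
    using push_vertex[OF c] max_support[OF s] by simp
  fix q assume q: "push c n s q \<noteq> 0"
  then obtain j where j: "j \<le> n" "q = c j" by (metis push_nonzero_imp_vertex)
  then have "j \<le> max_support n s"
    using q push_vertex[OF c j(1)] max_support(3)[OF s] by simp
  then show "q \<le> c (max_support n s)"
    using j max_support(1)[OF s] strict_mono_on_leD[OF c] by simp
qed

lemma nerve_strat_push_comp:
  assumes c: "strict_mono_on {..n} c" and \<alpha>: "strict_mono_on (c ` {..n}) \<alpha>"
    and s: "s \<in> standard_simplex n"
  shows "nerve_strat (push (\<alpha> \<circ> c) n s) = \<alpha> (nerve_strat (push c n s))"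
proof -
  have "strict_mono_on {..n} (\<alpha> \<circ> c)"
    using c \<alpha> by (auto simp: strict_mono_on_def)
  then show ?thesis
    using nerve_strat_push[OF c s] nerve_strat_push[of n "\<alpha> \<circ> c" s] s by simp
qed

lemma push_in_nerve_pts:
  assumes c: "nd_simplex P n c" and s: "s \<in> standard_simplex n"
  shows "push c n s \<in> nerve_pts P"
proof -
  have mono: "strict_mono_on {..n} c" using nd_simplex_imp_strict_mono_on[OF c] .
  have supp: "{p. push c n s p \<noteq> 0} \<subseteq> c ` {..n}"
    using push_nonzero_imp_vertex by fastforce
  have chain: "p \<le> q \<or> q \<le> p" if p: "push c n s p \<noteq> 0" and q: "push c n s q \<noteq> 0" for p q
  proof -
    obtain i where i: "i \<le> n" "p = c i" using push_nonzero_imp_vertex[OF p] by blast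
    obtain j where j: "j \<le> n" "q = c j" using push_nonzero_imp_vertex[OF q] by blast
    show ?thesis
      using nat_le_linear[of i j] strict_mono_on_leD[OF mono, of i j]
        strict_mono_on_leD[OF mono, of j i] i j by auto
  qed
  have "(\<Sum>p\<in>{p. push c n s p \<noteq> 0}. push c n s p) = (\<Sum>v \<in> c ` {..n}. push c n s v)"
    by (rule sum.mono_neutral_left) (use supp in auto)
  also have "\<dots> = 1"
    using s by (simp add: sum_push_vertices standard_simplex_def)
  finally have "(\<Sum>p\<in>{p. push c n s p \<noteq> 0}. push c n s p) = 1" .
  moreover have "{p. push c n s p \<noteq> 0} \<subseteq> P"
    using supp c by (auto simp: nd_simplex_def)
  ultimately show ?thesis
    unfolding nerve_pts_def using chain push_nonneg[OF s] finite_subset[OF supp] by auto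
qed

lemma topspace_nerve_top: "topspace (nerve_top P) = nerve_pts P"
proof
  show "topspace (nerve_top P) \<subseteq> nerve_pts P"
    using openin_nerve_top openin_topspace by blast
  have "{s \<in> standard_simplex n. push c n s \<in> nerve_pts P} = topspace (simplex_top n)"
    if "nd_simplex P n c" for n c
    using push_in_nerve_pts[OF that] by auto
  then have "openin (nerve_top P) (nerve_pts P)"
    unfolding openin_nerve_top by (metis openin_topspace order_refl)
  then show "nerve_pts P \<subseteq> topspace (nerve_top P)" using openin_subset by blast
qed

lemma continuous_map_push_nerve_top:
  assumes "nd_simplex P n c"
  shows "continuous_map (simplex_top n) (nerve_top P) (push c n)"
  unfolding continuous_map_def
proof (intro conjI allI impI)
  show "push c n \<in> topspace (simplex_top n) \<rightarrow> topspace (nerve_top P)"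
    using push_in_nerve_pts[OF assms] by (auto simp: topspace_nerve_top)
  fix U assume "openin (nerve_top P) U"
  then show "openin (simplex_top n) {x \<in> topspace (simplex_top n). push c n x \<in> U}"
    using assms unfolding openin_nerve_top by simp
qed

lemma continuous_map_nerve_strat_push:
  assumes c: "nd_simplex P n c"
  shows "continuous_map (simplex_top n) (alex P) (\<lambda>s. nerve_strat (push c n s))"
  unfolding continuous_map_def
proof (intro conjI allI impI)
  have mono: "strict_mono_on {..n} c" using nd_simplex_imp_strict_mono_on[OF c] .
  show "(\<lambda>s. nerve_strat (push c n s)) \<in> topspace (simplex_top n) \<rightarrow> topspace (alex P)"
    using c max_support(1) by (auto simp: nerve_strat_push[OF mono] nd_simplex_def)
  fix U assume U: "openin (alex P) U"
  \<comment> \<open>an upward closed set pulls back to a union of open stars of vertices\<close>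
  have "{s \<in> topspace (simplex_top n). nerve_strat (push c n s) \<in> U}
      = (\<Union>i\<in>{i. i \<le> n \<and> c i \<in> U}. {s \<in> standard_simplex n. 0 < s i})"
  proof (intro equalityI subsetI)
    fix s assume "s \<in> {s \<in> topspace (simplex_top n). nerve_strat (push c n s) \<in> U}"
    then show "s \<in> (\<Union>i\<in>{i. i \<le> n \<and> c i \<in> U}. {s \<in> standard_simplex n. 0 < s i})"
      using max_support[of s n] by (auto simp: nerve_strat_push[OF mono])
  next
    fix s assume "s \<in> (\<Union>i\<in>{i. i \<le> n \<and> c i \<in> U}. {s \<in> standard_simplex n. 0 < s i})"
    then obtain i where i: "i \<le> n" "c i \<in> U" "s \<in> standard_simplex n" "0 < s i" by auto
    then have "c i \<le> c (max_support n s)"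
      using max_support[OF i(3)] strict_mono_on_leD[OF mono] by simp
    moreover have "c (max_support n s) \<in> P"
      using c max_support(1)[OF i(3)] by (simp add: nd_simplex_def)
    ultimately show "s \<in> {s \<in> topspace (simplex_top n). nerve_strat (push c n s) \<in> U}"
      using U i unfolding openin_alex by (simp add: nerve_strat_push[OF mono])
  qed
  then show "openin (simplex_top n) {s \<in> topspace (simplex_top n). nerve_strat (push c n s) \<in> U}"
    by (auto intro!: openin_Union simp: openin_simplex_coordinate_pos)
qed

lemma push_face_in_standard_simplex:
  assumes d: "face k m d" and s: "s \<in> standard_simplex k"
  shows "push d k s \<in> standard_simplex m"
proof -
  have "push d k s i \<le> (\<Sum>j\<le>k. s j)" for i
    unfolding push_def by (rule sum_mono2) (use s in \<open>auto simp: standard_simplex_def\<close>)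
  then have le1: "push d k s i \<le> 1" for i
    using s by (simp add: standard_simplex_def)
  have vanish: "push d k s i = 0" if "m < i" for i
  proof -
    have "{j. j \<le> k \<and> d j = i} = {}" using d that by (auto simp: face_def)
    then show ?thesis unfolding push_def by (simp only: sum.empty)
  qed
  have "(\<Sum>i\<le>m. push d k s i) = (\<Sum>j\<le>k. s j)"
    unfolding push_def
    using sum.group[of "{..k}" "{..m}" d s] d by (auto simp: face_def atMost_def)
  then show ?thesis
    using s push_nonneg[OF s, of d] le1 vanish by (simp add: standard_simplex_def)
qed

lemma push_push_face:
  assumes "face k m d"
  shows "push c m (push d k s) = push (c \<circ> d) k s"
proof
  fix v
  have "push c m (push d k s) v
      = (\<Sum>i\<in>{i. i \<le> m \<and> c i = v}. \<Sum>j\<in>{j. j \<in> {j. j \<le> k \<and> c (d j) = v} \<and> d j = i}. s j)"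
    unfolding push_def by (intro sum.cong refl) auto
  also have "\<dots> = (\<Sum>j\<in>{j. j \<le> k \<and> c (d j) = v}. s j)"
    by (rule sum.group) (use assms in \<open>auto simp: face_def\<close>)
  finally show "push c m (push d k s) v = push (c \<circ> d) k s v" by (simp add: push_def)
qed

lemma continuous_map_push_face:
  assumes "face k m d"
  shows "continuous_map (simplex_top k) (simplex_top m) (push d k)"
proof -
  have "continuous_map (simplex_top k) (powertop_real UNIV) (push d k)"
    unfolding continuous_map_componentwise_UNIV push_def
    by (intro allI continuous_map_sum) (simp_all add: continuous_map_simplex_coordinate)
  then show ?thesis
    using push_face_in_standard_simplex[OF assms]
    by (auto simp: simplex_top_def continuous_map_in_subtopology)
qed

section \<open>The compact-open topology and the exponential law\<close>

lemma topspace_compact_open: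
  "topspace (compact_open S Z) = {g \<in> extensional (topspace S). continuous_map S Z g}"
proof -
  have "{g \<in> extensional (topspace S). g ` {} \<subseteq> {}} = extensional (topspace S)" by simp
  then have "\<Union>{{g \<in> extensional (topspace S). g ` K \<subseteq> U} | K U. compactin S K \<and> openin Z U}
      = extensional (topspace S)"
    by blast
  then show ?thesis by (auto simp: compact_open_def)
qed

lemma continuous_map_into_compact_open:
  assumes "\<And>k. k \<in> topspace K \<Longrightarrow> \<sigma> k \<in> extensional (topspace S) \<and> continuous_map S Z (\<sigma> k)"
    and "\<And>C U. compactin S C \<Longrightarrow> openin Z U \<Longrightarrow> openin K {k \<in> topspace K. \<sigma> k ` C \<subseteq> U}"
  shows "continuous_map K (compact_open S Z) \<sigma>"
  unfolding compact_open_def continuous_map_in_subtopology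
proof
  let ?B = "{{g \<in> extensional (topspace S). g ` K \<subseteq> U} | K U. compactin S K \<and> openin Z U}"
  show "\<sigma> \<in> topspace K \<rightarrow> {g \<in> extensional (topspace S). continuous_map S Z g}"
    using assms(1) by auto
  show "continuous_map K (topology_generated_by ?B) \<sigma>"
  proof (rule continuous_on_generated_topo)
    show "\<sigma> ` topspace K \<subseteq> \<Union> ?B"
      using assms(1) by blast
    fix V assume "V \<in> ?B"
    then obtain C U where "compactin S C" "openin Z U"
      "V = {g \<in> extensional (topspace S). g ` C \<subseteq> U}"
      by blast
    moreover from this have "\<sigma> -` V \<inter> topspace K = {k \<in> topspace K. \<sigma> k ` C \<subseteq> U}"
      using assms(1) by auto
    ultimately show "openin K (\<sigma> -` V \<inter> topspace K)" using assms(2) by simp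
  qed
qed

lemma openin_compact_open:
  assumes "compactin S C" "openin Z U"
  shows "openin (compact_open S Z) {g \<in> topspace (compact_open S Z). g ` C \<subseteq> U}"
proof -
  let ?B = "{{g \<in> extensional (topspace S). g ` K \<subseteq> U} | K U. compactin S K \<and> openin Z U}"
  have "openin (topology_generated_by ?B) {g \<in> extensional (topspace S). g ` C \<subseteq> U}"
    by (rule topology_generated_by_Basis) (use assms in blast)
  then have "openin (compact_open S Z)
      ({g \<in> extensional (topspace S). continuous_map S Z g} \<inter>
       {g \<in> extensional (topspace S). g ` C \<subseteq> U})"
    unfolding compact_open_def by (rule openin_subtopology_Int2)
  moreover have "{g \<in> extensional (topspace S). continuous_map S Z g} \<inter>
      {g \<in> extensional (topspace S). g ` C \<subseteq> U} = {g \<in> topspace (compact_open S Z). g ` C \<subseteq> U}"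
    by (auto simp: topspace_compact_open)
  ultimately show ?thesis by simp
qed

lemma openin_continuous_map_compact_open_preimage:
  assumes "continuous_map K (compact_open S Z) \<sigma>" "compactin S C" "openin Z U"
  shows "openin K {k \<in> topspace K. \<sigma> k ` C \<subseteq> U}"
proof -
  have "openin K {k \<in> topspace K. \<sigma> k \<in> {g \<in> topspace (compact_open S Z). g ` C \<subseteq> U}}"
    by (rule openin_continuous_map_preimage[OF assms(1) openin_compact_open[OF assms(2,3)]])
  moreover have "{k \<in> topspace K. \<sigma> k \<in> {g \<in> topspace (compact_open S Z). g ` C \<subseteq> U}}
      = {k \<in> topspace K. \<sigma> k ` C \<subseteq> U}"
    using assms(1) by (auto simp: continuous_map_def)
  ultimately show ?thesis by simp
qed

lemma continuous_map_postcomp: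
  assumes f: "continuous_map Z Z' f"
  shows "continuous_map (compact_open S Z) (compact_open S Z') (postcomp S f)"
proof (rule continuous_map_into_compact_open)
  fix g assume "g \<in> topspace (compact_open S Z)"
  then have "continuous_map S Z' (f \<circ> g)"
    using continuous_map_compose f by (auto simp: topspace_compact_open)
  then show "postcomp S f g \<in> extensional (topspace S) \<and> continuous_map S Z' (postcomp S f g)"
    unfolding postcomp_def by (auto intro: continuous_map_eq)
next
  fix C U assume C: "compactin S C" and U: "openin Z' U"
  have "openin (compact_open S Z)
      {g \<in> topspace (compact_open S Z). g ` C \<subseteq> {z \<in> topspace Z. f z \<in> U}}"
    by (rule openin_compact_open[OF C openin_continuous_map_preimage[OF f U]])
  moreover have "{g \<in> topspace (compact_open S Z). g ` C \<subseteq> {z \<in> topspace Z. f z \<in> U}}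
      = {g \<in> topspace (compact_open S Z). postcomp S f g ` C \<subseteq> U}"
  proof (intro Collect_cong conj_cong refl)
    fix g assume "g \<in> topspace (compact_open S Z)"
    then have "g ` C \<subseteq> topspace Z"
      using compactin_subset_topspace[OF C]
      by (auto simp: topspace_compact_open continuous_map_def)
    moreover have "postcomp S f g ` C = f ` g ` C"
      using compactin_subset_topspace[OF C] by (force simp: postcomp_def)
    ultimately show "g ` C \<subseteq> {z \<in> topspace Z. f z \<in> U} \<longleftrightarrow> postcomp S f g ` C \<subseteq> U"
      by auto
  qed
  ultimately show "openin (compact_open S Z)
      {g \<in> topspace (compact_open S Z). postcomp S f g ` C \<subseteq> U}"
    by simp
qed

lemma continuous_map_uncurry_compact_open:
  assumes S: "compact_space S" "regular_space S"
    and \<sigma>: "continuous_map K (compact_open S Z) \<sigma>"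
  shows "continuous_map (prod_topology K S) Z (\<lambda>(k, s). \<sigma> k s)"
  unfolding continuous_map_def
proof (intro conjI allI impI)
  have \<sigma>k: "continuous_map S Z (\<sigma> k)" if "k \<in> topspace K" for k
    using \<sigma> that by (auto simp: continuous_map_def topspace_compact_open)
  then show "(\<lambda>(k, s). \<sigma> k s) \<in> topspace (prod_topology K S) \<rightarrow> topspace Z"
    by (auto simp: continuous_map_def)
  fix U assume U: "openin Z U"
  show "openin (prod_topology K S) {x \<in> topspace (prod_topology K S). (\<lambda>(k, s). \<sigma> k s) x \<in> U}"
  proof (subst openin_subopen, intro ballI)
    fix x assume "x \<in> {x \<in> topspace (prod_topology K S). (\<lambda>(k, s). \<sigma> k s) x \<in> U}"
    then obtain k0 s0 where x: "x = (k0, s0)" "k0 \<in> topspace K" "s0 \<in> topspace S" "\<sigma> k0 s0 \<in> U"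
      by auto
    have "openin S {s \<in> topspace S. \<sigma> k0 s \<in> U}"
      by (rule openin_continuous_map_preimage[OF \<sigma>k[OF x(2)] U])
    then obtain V C where VC: "openin S V" "closedin S C" "s0 \<in> V" "V \<subseteq> C"
        "C \<subseteq> {s \<in> topspace S. \<sigma> k0 s \<in> U}"
      using S(2) x unfolding neighbourhood_base_of_closedin[symmetric] neighbourhood_base_of
      by (metis (no_types, lifting) mem_Collect_eq)
    define N where "N = {k \<in> topspace K. \<sigma> k ` C \<subseteq> U}"
    have "openin K N"
      unfolding N_def using closedin_compact_space[OF S(1) VC(2)]
      by (rule openin_continuous_map_compact_open_preimage[OF \<sigma> _ U])
    moreover have "k0 \<in> N" using VC(5) x(2) by (auto simp: N_def)
    moreover have "N \<times> V \<subseteq> {x \<in> topspace (prod_topology K S). (\<lambda>(k, s). \<sigma> k s) x \<in> U}"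
      using openin_subset[OF VC(1)] VC(4) by (auto simp: N_def)
    ultimately show "\<exists>T. openin (prod_topology K S) T \<and> x \<in> T \<and>
        T \<subseteq> {x \<in> topspace (prod_topology K S). (\<lambda>(k, s). \<sigma> k s) x \<in> U}"
      using VC(1,3) x(1) by (intro exI[of _ "N \<times> V"]) (auto simp: openin_prod_Times_iff)
  qed
qed

lemma continuous_map_curry_compact_open:
  assumes H: "continuous_map (prod_topology K S) Z H"
    and \<sigma>: "\<And>k. k \<in> topspace K \<Longrightarrow> \<sigma> k \<in> extensional (topspace S)"
    and \<sigma>H: "\<And>k s. k \<in> topspace K \<Longrightarrow> s \<in> topspace S \<Longrightarrow> \<sigma> k s = H (k, s)"
  shows "continuous_map K (compact_open S Z) \<sigma>"
proof (rule continuous_map_into_compact_open)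
  fix k assume k: "k \<in> topspace K"
  have "continuous_map S Z (\<sigma> k)"
    using continuous_map_o_Pair[OF H k] by (rule continuous_map_eq) (simp add: \<sigma>H[OF k])
  then show "\<sigma> k \<in> extensional (topspace S) \<and> continuous_map S Z (\<sigma> k)" using \<sigma>[OF k] by simp
next
  fix C U assume C: "compactin S C" and U: "openin Z U"
  have Csub: "C \<subseteq> topspace S" by (rule compactin_subset_topspace[OF C])
  define W where "W = {x \<in> topspace (prod_topology K S). H x \<in> U}"
  have W: "openin (prod_topology K S) W"
    unfolding W_def by (rule openin_continuous_map_preimage[OF H U])
  have in_W: "(k, s) \<in> W \<longleftrightarrow> \<sigma> k s \<in> U" if "k \<in> topspace K" "s \<in> C" for k s
    using that Csub \<sigma>H by (auto simp: W_def)
  show "openin K {k \<in> topspace K. \<sigma> k ` C \<subseteq> U}"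
  proof (subst openin_subopen, intro ballI)
    fix k0 assume "k0 \<in> {k \<in> topspace K. \<sigma> k ` C \<subseteq> U}"
    then have k0: "k0 \<in> topspace K" "\<sigma> k0 ` C \<subseteq> U" by auto
    then have "{k0} \<times> C \<subseteq> W" using in_W by auto
    with tube_lemma_right[OF W C k0(1)]
    obtain N V where NV: "openin K N" "openin S V" "k0 \<in> N" "C \<subseteq> V" "N \<times> V \<subseteq> W"
      by blast
    have "N \<subseteq> {k \<in> topspace K. \<sigma> k ` C \<subseteq> U}"
    proof
      fix k assume kN: "k \<in> N"
      then have k: "k \<in> topspace K" using openin_subset[OF NV(1)] by blast
      have "\<sigma> k s \<in> U" if "s \<in> C" for s
        using in_W[OF k that] NV(4,5) kN that by blast
      then show "k \<in> {k \<in> topspace K. \<sigma> k ` C \<subseteq> U}" using k by blast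
    qed
    then show "\<exists>T. openin K T \<and> k0 \<in> T \<and> T \<subseteq> {k \<in> topspace K. \<sigma> k ` C \<subseteq> U}"
      using NV by blast
  qed
qed

section \<open>Products of simplices are retracts of simplices\<close>

text \<open>\<open>\<Delta>\<^sup>N \<times> \<Delta>\<^sup>n\<close> embeds into \<open>\<Delta>\<^sup>M\<close>, \<open>M = (N + 1) (n + 1) - 1\<close>, as product measures on the grid
  \<open>{..N} \<times> {..n}\<close> (enumerated row by row); taking the two marginals is a retraction.\<close>
definition simplex_tensor :: "nat \<Rightarrow> (nat \<Rightarrow> real) \<times> (nat \<Rightarrow> real) \<Rightarrow> (nat \<Rightarrow> real)" where
  "simplex_tensor n x = (\<lambda>m. fst x (m div Suc n) * snd x (m mod Suc n))"

definition simplex_marginals ::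
  "nat \<Rightarrow> nat \<Rightarrow> (nat \<Rightarrow> real) \<Rightarrow> (nat \<Rightarrow> real) \<times> (nat \<Rightarrow> real)" where
  "simplex_marginals N n t =
     ((\<lambda>i. if i \<le> N then \<Sum>j\<le>n. t (i * Suc n + j) else 0),
      (\<lambda>j. if j \<le> n then \<Sum>i\<le>N. t (i * Suc n + j) else 0))"

lemma sum_lessThan_mult_grid:
  fixes f :: "nat \<Rightarrow> 'a::comm_monoid_add"
  shows "(\<Sum>m<N * q. f m) = (\<Sum>i<N. \<Sum>j<q. f (i * q + j))"
proof -
  have "(\<Sum>m<N * q. f m) = (\<Sum>i<N. sum f {i * q..<i * q + q})"
    using sum.nat_group[of f q N] by simp
  also have "\<dots> = (\<Sum>i<N. \<Sum>j<q. f (i * q + j))"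
  proof (rule sum.cong[OF refl])
    fix i
    have "sum f {0 + i * q..<q + i * q} = (\<Sum>j = 0..<q. f (j + i * q))"
      by (rule sum.shift_bounds_nat_ivl)
    then show "sum f {i * q..<i * q + q} = (\<Sum>j<q. f (i * q + j))"
      by (simp add: add.commute atLeast0LessThan)
  qed
  finally show ?thesis .
qed

lemma sum_standard_simplex_grid:
  "(\<Sum>m\<le>Suc N * Suc n - 1. t m) = (\<Sum>i\<le>N. \<Sum>j\<le>n. t (i * Suc n + j))"
proof -
  have "(\<Sum>m\<le>Suc N * Suc n - 1. t m) = (\<Sum>m<Suc N * Suc n. t m)"
    by (rule sum.cong) auto
  also have "\<dots> = (\<Sum>i<Suc N. \<Sum>j<Suc n. t (i * Suc n + j))"
    by (rule sum_lessThan_mult_grid)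
  finally show ?thesis by (simp only: lessThan_Suc_atMost)
qed

lemma grid_div_mod:
  assumes "j \<le> n"
  shows "(i * Suc n + j) div Suc n = i" "(i * Suc n + j) mod Suc n = j"
  using assms by (simp_all only: add.commute[of "i * Suc n"] div_mult_self1 mod_mult_self1
      Zero_not_Suc not_False_eq_True) simp_all

lemma simplex_tensor_grid:
  "j \<le> n \<Longrightarrow> simplex_tensor n (a, b) (i * Suc n + j) = a i * b j"
  unfolding simplex_tensor_def fst_conv snd_conv by (simp only: grid_div_mod)

lemma standard_simplex_iff:
  "x \<in> standard_simplex n \<longleftrightarrow> (\<forall>i. 0 \<le> x i) \<and> (\<forall>i>n. x i = 0) \<and> (\<Sum>i\<le>n. x i) = 1"
proof -
  have "x i \<le> 1" if "\<forall>i. 0 \<le> x i" "\<forall>i>n. x i = 0" "(\<Sum>i\<le>n. x i) = 1" for i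
  proof (cases "i \<le> n")
    case True
    then show ?thesis using that member_le_sum[of i "{..n}" x] by simp
  qed (use that in simp)
  then show ?thesis by (auto simp: standard_simplex_def)
qed

lemma simplex_tensor_in_standard_simplex:
  assumes a: "a \<in> standard_simplex N" and b: "b \<in> standard_simplex n"
  shows "simplex_tensor n (a, b) \<in> standard_simplex (Suc N * Suc n - 1)"
  unfolding standard_simplex_iff
proof (intro conjI allI impI)
  show "0 \<le> simplex_tensor n (a, b) m" for m
    using a b by (simp add: simplex_tensor_def standard_simplex_def)
  show "simplex_tensor n (a, b) m = 0" if "Suc N * Suc n - 1 < m" for m
  proof -
    have "Suc N * Suc n \<le> m" using that by simp
    then have "Suc N \<le> m div Suc n"
      by (metis div_le_mono nonzero_mult_div_cancel_right Zero_not_Suc)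
    then show ?thesis using a by (simp add: simplex_tensor_def standard_simplex_def)
  qed
  have "(\<Sum>m\<le>Suc N * Suc n - 1. simplex_tensor n (a, b) m)
      = (\<Sum>i\<le>N. \<Sum>j\<le>n. simplex_tensor n (a, b) (i * Suc n + j))"
    by (rule sum_standard_simplex_grid)
  also have "\<dots> = (\<Sum>i\<le>N. \<Sum>j\<le>n. a i * b j)"
    by (intro sum.cong refl) (rule simplex_tensor_grid; simp)
  also have "\<dots> = (\<Sum>i\<le>N. a i) * (\<Sum>j\<le>n. b j)"
    by (simp add: sum_product)
  finally show "(\<Sum>m\<le>Suc N * Suc n - 1. simplex_tensor n (a, b) m) = 1"
    using a b by (simp add: standard_simplex_def)
qed

lemma simplex_marginals_tensor:
  assumes a: "a \<in> standard_simplex N" and b: "b \<in> standard_simplex n"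
  shows "simplex_marginals N n (simplex_tensor n (a, b)) = (a, b)"
proof -
  have rows: "(\<Sum>j\<le>n. simplex_tensor n (a, b) (i * Suc n + j)) = a i" for i
  proof -
    have "(\<Sum>j\<le>n. simplex_tensor n (a, b) (i * Suc n + j)) = (\<Sum>j\<le>n. a i * b j)"
      by (intro sum.cong refl) (rule simplex_tensor_grid; simp)
    also have "\<dots> = a i"
      using b by (simp add: standard_simplex_def flip: sum_distrib_left)
    finally show ?thesis .
  qed
  have cols: "(\<Sum>i\<le>N. simplex_tensor n (a, b) (i * Suc n + j)) = b j" if "j \<le> n" for j
  proof -
    have "(\<Sum>i\<le>N. simplex_tensor n (a, b) (i * Suc n + j)) = (\<Sum>i\<le>N. a i * b j)"
      by (intro sum.cong refl) (rule simplex_tensor_grid; use that in simp)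
    also have "\<dots> = b j"
      using a by (simp add: standard_simplex_def flip: sum_distrib_right)
    finally show ?thesis .
  qed
  show ?thesis
    using a b rows cols by (auto simp: simplex_marginals_def standard_simplex_def fun_eq_iff)
qed

lemma simplex_marginals_in_standard_simplex:
  assumes t: "t \<in> standard_simplex (Suc N * Suc n - 1)"
  shows "fst (simplex_marginals N n t) \<in> standard_simplex N"
    and "snd (simplex_marginals N n t) \<in> standard_simplex n"
proof -
  have nonneg: "0 \<le> t m" for m using t by (simp add: standard_simplex_def)
  have "(\<Sum>i\<le>N. \<Sum>j\<le>n. t (i * Suc n + j)) = (\<Sum>m\<le>Suc N * Suc n - 1. t m)"
    by (rule sum_standard_simplex_grid[symmetric])
  then have total: "(\<Sum>i\<le>N. \<Sum>j\<le>n. t (i * Suc n + j)) = 1"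
    using t by (simp add: standard_simplex_def)
  then show "fst (simplex_marginals N n t) \<in> standard_simplex N"
    "snd (simplex_marginals N n t) \<in> standard_simplex n"
    unfolding standard_simplex_iff
    by (auto simp: simplex_marginals_def nonneg sum_nonneg intro: trans[OF sum.swap])
qed

lemma continuous_map_simplex_tensor:
  "continuous_map (prod_topology (simplex_top N) (simplex_top n))
     (simplex_top (Suc N * Suc n - 1)) (simplex_tensor n)"
proof -
  let ?K = "prod_topology (simplex_top N) (simplex_top n)"
  have "continuous_map ?K euclideanreal (\<lambda>x. fst x i)" "continuous_map ?K euclideanreal (\<lambda>x. snd x j)"
    for i j
    using continuous_map_compose[OF continuous_map_fst continuous_map_simplex_coordinate[of N i]]
      continuous_map_compose[OF continuous_map_snd continuous_map_simplex_coordinate[of n j]]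
    by (simp_all add: o_def)
  then have "continuous_map ?K (powertop_real UNIV) (simplex_tensor n)"
    unfolding continuous_map_componentwise_UNIV simplex_tensor_def
    by (intro allI continuous_map_real_mult)
  then show ?thesis
    using simplex_tensor_in_standard_simplex
    by (auto simp: simplex_top_def continuous_map_in_subtopology)
qed

lemma continuous_map_simplex_marginals:
  "continuous_map (simplex_top (Suc N * Suc n - 1))
     (prod_topology (simplex_top N) (simplex_top n)) (simplex_marginals N n)"
  unfolding continuous_map_pairwise
proof
  let ?M = "Suc N * Suc n - 1"
  have "continuous_map (simplex_top ?M) (powertop_real UNIV) (fst \<circ> simplex_marginals N n)"
    "continuous_map (simplex_top ?M) (powertop_real UNIV) (snd \<circ> simplex_marginals N n)"
    unfolding continuous_map_componentwise_UNIV
    by (auto simp: simplex_marginals_def o_def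
        intro!: continuous_map_sum continuous_map_simplex_coordinate)
  then show "continuous_map (simplex_top ?M) (simplex_top N) (fst \<circ> simplex_marginals N n)"
    "continuous_map (simplex_top ?M) (simplex_top n) (snd \<circ> simplex_marginals N n)"
    using simplex_marginals_in_standard_simplex
    by (auto simp: simplex_top_def continuous_map_in_subtopology)
qed

lemma continuous_map_prod_simplex_into_dgen:
  assumes "continuous_map (prod_topology (simplex_top N) (simplex_top n)) Z H"
  shows "continuous_map (prod_topology (simplex_top N) (simplex_top n)) (dgen Z) H"
proof (rule continuous_map_into_dgen_of_retract
    [OF continuous_map_simplex_tensor continuous_map_simplex_marginals _ assms])
  fix x assume "x \<in> topspace (prod_topology (simplex_top N) (simplex_top n))"
  then show "simplex_marginals N n (simplex_tensor n x) = x"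
    using simplex_marginals_tensor by (auto simp: case_prod_unfold)
qed

section \<open>Spaces of maps over a base\<close>

lemma compact_space_simplex_top: "compact_space (simplex_top n)"
  unfolding simplex_top_def by (rule compact_space_subtopology[OF compactin_standard_simplex])

lemma regular_space_simplex_top: "regular_space (simplex_top n)"
proof (rule compact_Hausdorff_imp_regular_space[OF compact_space_simplex_top])
  show "Hausdorff_space (simplex_top n)"
    unfolding simplex_top_def
    by (intro Hausdorff_space_subtopology) (simp add: Hausdorff_space_product_topology)
qed

lemma topspace_map_space:
  "topspace (map_space A \<phi>A X \<phi>X) =
     {g \<in> extensional (topspace A). continuous_map A X g \<and> (\<forall>s\<in>topspace A. \<phi>X (g s) = \<phi>A s)}"
  by (auto simp: map_space_def topspace_compact_open)

lemma topspace_pullback_top: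
  "topspace (pullback_top T \<phi> S \<psi>) = {(x, y). x \<in> topspace T \<and> y \<in> topspace S \<and> \<phi> x = \<psi> y}"
  by (auto simp: pullback_top_def)

lemma continuous_map_pullback_top_fst: "continuous_map (pullback_top T \<phi> S \<psi>) T fst"
  unfolding pullback_top_def
  using continuous_map_compose[OF continuous_map_dgen_id
      continuous_map_from_subtopology[OF continuous_map_fst]]
  by (simp add: o_def)

lemma continuous_map_prod_simplex_into_pullback_top:
  assumes "continuous_map (prod_topology (simplex_top N) (simplex_top n)) T (\<lambda>x. fst (H x))"
    and "continuous_map (prod_topology (simplex_top N) (simplex_top n)) S (\<lambda>x. snd (H x))"
    and "\<And>x. x \<in> topspace (prod_topology (simplex_top N) (simplex_top n)) \<Longrightarrow>
           \<phi> (fst (H x)) = \<psi> (snd (H x))"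
  shows "continuous_map (prod_topology (simplex_top N) (simplex_top n)) (pullback_top T \<phi> S \<psi>) H"
  unfolding pullback_top_def
proof (rule continuous_map_prod_simplex_into_dgen)
  have "continuous_map (prod_topology (simplex_top N) (simplex_top n)) (prod_topology T S) H"
    using assms(1,2) by (simp add: continuous_map_pairwise o_def)
  moreover have "H x \<in> {(x, y). x \<in> topspace T \<and> y \<in> topspace S \<and> \<phi> x = \<psi> y}"
    if "x \<in> topspace (prod_topology (simplex_top N) (simplex_top n))" for x
    using assms that by (auto simp: continuous_map_def Pi_iff case_prod_unfold)
  ultimately show "continuous_map (prod_topology (simplex_top N) (simplex_top n))
     (subtopology (prod_topology T S) {(x, y). x \<in> topspace T \<and> y \<in> topspace S \<and> \<phi> x = \<psi> y}) H"
    by (auto simp: continuous_map_in_subtopology)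
qed

lemma continuous_map_postcomp_map_space:
  assumes g: "continuous_map X X' g"
    and over: "\<And>x. x \<in> topspace X \<Longrightarrow> \<phi>X' (g x) = \<beta> (\<phi>X x)"
    and base: "\<And>s. s \<in> topspace A \<Longrightarrow> \<phi>A' s = \<beta> (\<phi>A s)"
  shows "continuous_map (map_space A \<phi>A X \<phi>X) (map_space A \<phi>A' X' \<phi>X') (postcomp A g)"
  unfolding map_space_def
proof (rule continuous_map_dgen_dgen)
  have "\<phi>X' (postcomp A g \<gamma> s) = \<phi>A' s"
    if "\<gamma> \<in> topspace (compact_open A X)" "\<forall>s\<in>topspace A. \<phi>X (\<gamma> s) = \<phi>A s" "s \<in> topspace A"
    for \<gamma> s
    using that over base
    by (auto simp: postcomp_def topspace_compact_open continuous_map_def Pi_iff)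
  then show "continuous_map (subtopology (compact_open A X) {\<gamma>. \<forall>s\<in>topspace A. \<phi>X (\<gamma> s) = \<phi>A s})
      (subtopology (compact_open A X') {\<gamma>. \<forall>s\<in>topspace A. \<phi>X' (\<gamma> s) = \<phi>A' s}) (postcomp A g)"
    unfolding continuous_map_in_subtopology
    by (auto intro: continuous_map_from_subtopology[OF continuous_map_postcomp[OF g]])
qed

lemma homeomorphic_maps_map_space_pullback:
  assumes e: "continuous_map (simplex_top n) T e"
    and base: "\<And>s. s \<in> standard_simplex n \<Longrightarrow> \<psi> (e s) = \<phi>A s"
  shows "homeomorphic_maps (map_space (simplex_top n) \<phi>A X \<phi>X)
           (map_space (simplex_top n) e (pullback_top X \<phi>X T \<psi>) snd)
           (\<lambda>\<gamma>. restrict (\<lambda>s. (\<gamma> s, e s)) (standard_simplex n)) (postcomp (simplex_top n) fst)"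
  unfolding map_space_def
proof (rule homeomorphic_maps_dgen)
  let ?S = "simplex_top n"
  let ?Z = "pullback_top X \<phi>X T \<psi>"
  let ?F1 = "{g. \<forall>s\<in>topspace ?S. \<phi>X (g s) = \<phi>A s}"
  let ?F2 = "{g. \<forall>s\<in>topspace ?S. snd (g s) = e s}"
  let ?pair = "\<lambda>\<gamma>. restrict (\<lambda>s. (\<gamma> s, e s)) (standard_simplex n)"
  fix N \<sigma>
  {
    assume \<sigma>: "continuous_map (simplex_top N) (subtopology (compact_open ?S X) ?F1) \<sigma>"
    then have \<sigma>co: "continuous_map (simplex_top N) (compact_open ?S X) \<sigma>"
      and \<sigma>F: "\<And>k. k \<in> topspace (simplex_top N) \<Longrightarrow> \<sigma> k \<in> ?F1"
      by (auto simp: continuous_map_in_subtopology)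
    have "continuous_map (prod_topology (simplex_top N) ?S) ?Z (\<lambda>(k, s). (\<sigma> k s, e s))"
    proof (rule continuous_map_prod_simplex_into_pullback_top)
      show "continuous_map (prod_topology (simplex_top N) ?S) X
          (\<lambda>x. fst ((\<lambda>(k, s). (\<sigma> k s, e s)) x))"
        using continuous_map_uncurry_compact_open[OF compact_space_simplex_top
            regular_space_simplex_top \<sigma>co]
        by (simp add: case_prod_unfold)
      show "continuous_map (prod_topology (simplex_top N) ?S) T
          (\<lambda>x. snd ((\<lambda>(k, s). (\<sigma> k s, e s)) x))"
        using continuous_map_compose[OF continuous_map_snd e] by (simp add: case_prod_unfold o_def)
    qed (use \<sigma>F base in auto)
    then have "continuous_map (simplex_top N) (compact_open ?S ?Z) (?pair \<circ> \<sigma>)"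
      by (rule continuous_map_curry_compact_open) auto
    then show "continuous_map (simplex_top N) (subtopology (compact_open ?S ?Z) ?F2) (?pair \<circ> \<sigma>)"
      by (simp add: continuous_map_in_subtopology)
  }
  {
    assume \<sigma>: "continuous_map (simplex_top N) (subtopology (compact_open ?S ?Z) ?F2) \<sigma>"
    then have \<sigma>co: "continuous_map (simplex_top N) (compact_open ?S ?Z) \<sigma>"
      and \<sigma>F: "\<And>k. k \<in> topspace (simplex_top N) \<Longrightarrow> \<sigma> k \<in> ?F2"
      by (auto simp: continuous_map_in_subtopology)
    have "(postcomp ?S fst \<circ> \<sigma>) k \<in> ?F1" if k: "k \<in> topspace (simplex_top N)" for k
    proof -
      have "\<sigma> k s \<in> topspace ?Z" if "s \<in> topspace ?S" for s
        using \<sigma>co k that by (auto simp: topspace_compact_open continuous_map_def)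
      then show ?thesis
        using \<sigma>F[OF k] base by (auto simp: postcomp_def topspace_pullback_top case_prod_unfold)
    qed
    moreover have "continuous_map (simplex_top N) (compact_open ?S X) (postcomp ?S fst \<circ> \<sigma>)"
      using \<sigma>co continuous_map_postcomp[OF continuous_map_pullback_top_fst]
      by (rule continuous_map_compose)
    ultimately show "continuous_map (simplex_top N) (subtopology (compact_open ?S X) ?F1)
        (postcomp ?S fst \<circ> \<sigma>)"
      by (simp add: continuous_map_in_subtopology)
  }
next
  fix \<gamma> assume "\<gamma> \<in> topspace (subtopology (compact_open (simplex_top n) X)
     {g. \<forall>s\<in>topspace (simplex_top n). \<phi>X (g s) = \<phi>A s})"
  then show "postcomp (simplex_top n) fst (restrict (\<lambda>s. (\<gamma> s, e s)) (standard_simplex n)) = \<gamma>"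
    by (auto simp: postcomp_def extensional_def topspace_compact_open)
next
  fix \<delta> assume "\<delta> \<in> topspace (subtopology (compact_open (simplex_top n) (pullback_top X \<phi>X T \<psi>))
     {g. \<forall>s\<in>topspace (simplex_top n). snd (g s) = e s})"
  then show "restrict (\<lambda>s. (postcomp (simplex_top n) fst \<delta> s, e s)) (standard_simplex n) = \<delta>"
    by (auto simp: postcomp_def extensional_def prod_eq_iff topspace_compact_open)
qed

section \<open>Weak homotopy equivalences and homeomorphisms\<close>

lemma path_component_of_set_eq_iff:
  "x \<in> topspace X \<Longrightarrow> y \<in> topspace X \<Longrightarrow>
     path_component_of_set X x = path_component_of_set X y \<longleftrightarrow> path_component_of X x y"
  by (simp add: path_component_of_equiv[of X x y] set_eq_iff fun_eq_iff)

lemma pi0_bij_iff: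
  assumes h: "continuous_map T T' h"
  shows "pi0_bij T T' h \<longleftrightarrow>
     (\<forall>y\<in>topspace T'. \<exists>x\<in>topspace T. path_component_of T' (h x) y) \<and>
     (\<forall>x1\<in>topspace T. \<forall>x2\<in>topspace T.
        path_component_of T' (h x1) (h x2) \<longrightarrow> path_component_of T x1 x2)"
proof -
  let ?F = "\<lambda>C. path_component_of_set T' (h (SOME x. x \<in> C))"
  have hT: "h x \<in> topspace T'" if "x \<in> topspace T" for x
    using h that by (auto simp: continuous_map_def)
  have F: "?F (path_component_of_set T x) = path_component_of_set T' (h x)"
    if x: "x \<in> topspace T" for x
  proof -
    have "path_component_of T x (SOME y. path_component_of T x y)"
      by (rule someI[of _ x]) (simp add: path_component_of_refl x)
    then have "path_component_of T' (h x) (h (SOME y. path_component_of T x y))"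
      by (rule path_component_of_continuous_image[OF h])
    then show ?thesis by (simp add: path_component_of_equiv)
  qed
  have image: "?F ` path_components_of T = (\<lambda>x. path_component_of_set T' (h x)) ` topspace T"
    unfolding path_components_of_def image_image using F by (rule image_cong[OF refl])
  have into: "(\<lambda>x. path_component_of_set T' (h x)) ` topspace T \<subseteq> path_components_of T'"
    using hT by (auto simp: path_components_of_def)
  have onto_iff: "path_components_of T' \<subseteq> (\<lambda>x. path_component_of_set T' (h x)) ` topspace T \<longleftrightarrow>
      (\<forall>y\<in>topspace T'. \<exists>x\<in>topspace T. path_component_of T' (h x) y)"
  proof
    assume onto: "path_components_of T' \<subseteq> (\<lambda>x. path_component_of_set T' (h x)) ` topspace T"
    show "\<forall>y\<in>topspace T'. \<exists>x\<in>topspace T. path_component_of T' (h x) y"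
    proof
      fix y assume y: "y \<in> topspace T'"
      then have "path_component_of_set T' y \<in> (\<lambda>x. path_component_of_set T' (h x)) ` topspace T"
        using onto by (auto simp: path_components_of_def)
      then obtain x where x: "x \<in> topspace T"
          "path_component_of_set T' (h x) = path_component_of_set T' y"
        by (auto simp: image_iff)
      then show "\<exists>x\<in>topspace T. path_component_of T' (h x) y"
        using path_component_of_set_eq_iff[OF hT[OF x(1)] y] by blast
    qed
  next
    assume onto: "\<forall>y\<in>topspace T'. \<exists>x\<in>topspace T. path_component_of T' (h x) y"
    show "path_components_of T' \<subseteq> (\<lambda>x. path_component_of_set T' (h x)) ` topspace T"
    proof
      fix C assume "C \<in> path_components_of T'"
      then obtain y where y: "y \<in> topspace T'" "C = path_component_of_set T' y"
        by (auto simp: path_components_of_def)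
      obtain x where x: "x \<in> topspace T" "path_component_of T' (h x) y"
        using onto y(1) by blast
      then have "C = path_component_of_set T' (h x)"
        using path_component_of_set_eq_iff[OF hT[OF x(1)] y(1)] y(2) by simp
      then show "C \<in> (\<lambda>x. path_component_of_set T' (h x)) ` topspace T"
        using x(1) by (rule image_eqI)
    qed
  qed
  then have onto: "?F ` path_components_of T = path_components_of T' \<longleftrightarrow>
      (\<forall>y\<in>topspace T'. \<exists>x\<in>topspace T. path_component_of T' (h x) y)"
    unfolding image using into by (metis subset_antisym order_refl)
  have "inj_on ?F (path_components_of T) \<longleftrightarrow>
      (\<forall>x1\<in>topspace T. \<forall>x2\<in>topspace T.
         path_component_of T' (h x1) (h x2) \<longrightarrow> path_component_of T x1 x2)"
    unfolding path_components_of_def inj_on_def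
    by (simp add: F[simplified] hT path_component_of_set_eq_iff)
  with onto show ?thesis
    by (auto simp: pi0_bij_def bij_betw_def)
qed

lemma cube_bdry_subset_topspace: "cube_bdry n \<subseteq> topspace (cube_top n)"
  by (auto simp: cube_bdry_def)

lemma sph_map_in_topspace:
  "sph_map n X x0 g \<Longrightarrow> x \<in> topspace (cube_top n) \<Longrightarrow> g x \<in> topspace X"
  by (auto simp: sph_map_def continuous_map_def)

lemma sph_map_compose:
  "continuous_map T T' b \<Longrightarrow> sph_map n T x0 g \<Longrightarrow> sph_map n T' (b x0) (b \<circ> g)"
  unfolding sph_map_def using continuous_map_compose[of "cube_top n" T g T' b] by auto

lemma rel_homotopic_cong:
  assumes "rel_homotopic n T y g1 g2"
    and "\<And>x. x \<in> topspace (cube_top n) \<Longrightarrow> g1 x = g1' x"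
    and "\<And>x. x \<in> topspace (cube_top n) \<Longrightarrow> g2 x = g2' x"
  shows "rel_homotopic n T y g1' g2'"
proof -
  have "restrict g1 (topspace (cube_top n)) = restrict g1' (topspace (cube_top n))"
    "restrict g2 (topspace (cube_top n)) = restrict g2' (topspace (cube_top n))"
    using assms(2,3) by (auto intro: restrict_ext)
  then show ?thesis using assms(1) unfolding rel_homotopic_def by simp
qed

lemma rel_homotopic_compose:
  assumes b: "continuous_map T T' b" and H: "rel_homotopic n T y g1 g2"
  shows "rel_homotopic n T' (b y) (b \<circ> g1) (b \<circ> g2)"
proof -
  let ?C = "topspace (cube_top n)"
  have "homotopic_with (\<lambda>h. h ` cube_bdry n \<subseteq> {b y}) (cube_top n) T'
      (b \<circ> restrict g1 ?C) (b \<circ> restrict g2 ?C)"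
    using H unfolding rel_homotopic_def
    by (rule homotopic_with_compose_continuous_map_left[OF _ b]) fastforce
  then show ?thesis
    unfolding rel_homotopic_def
    by (rule homotopic_with_eq) (use cube_bdry_subset_topspace in \<open>force simp: image_subset_iff\<close>)+
qed

lemma pin_bij_transport:
  assumes a: "homeomorphic_maps T U a a'" and b: "homeomorphic_maps T' U' b b'"
    and h: "continuous_map T T' h" and k: "continuous_map U U' k"
    and comm: "\<And>x. x \<in> topspace T \<Longrightarrow> k (a x) = b (h x)"
    and x0: "x0 \<in> topspace T" and bij: "pin_bij n T T' h x0"
  shows "pin_bij n U U' k (a x0)"
proof -
  have ac: "continuous_map T U a" and a'c: "continuous_map U T a'"
    and a'a: "\<And>u. u \<in> topspace U \<Longrightarrow> a (a' u) = u"
    and bc: "continuous_map T' U' b" and b'c: "continuous_map U' T' b'"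
    and bb': "\<And>y. y \<in> topspace T' \<Longrightarrow> b' (b y) = y" and b'b: "\<And>v. v \<in> topspace U' \<Longrightarrow> b (b' v) = v"
    using a b by (auto simp: homeomorphic_maps_def)
  have a'T: "a' u \<in> topspace T" if "u \<in> topspace U" for u
    using a'c that by (auto simp: continuous_map_def)
  have hT: "h x \<in> topspace T'" if "x \<in> topspace T" for x
    using h that by (auto simp: continuous_map_def)
  have b'k: "b' (k u) = h (a' u)" if "u \<in> topspace U" for u
    using comm[OF a'T[OF that]] a'a[OF that] bb'[OF hT[OF a'T[OF that]]] by simp
  have b'k0: "b' (k (a x0)) = h x0"
    using comm[OF x0] bb'[OF hT[OF x0]] by simp
  have a'a0: "a' (a x0) = x0"
    using a x0 by (simp add: homeomorphic_maps_def)
  show ?thesis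
    unfolding pin_bij_def
  proof (intro conjI allI impI)
    fix g' assume g': "sph_map n U' (k (a x0)) g'"
    then have "sph_map n T' (h x0) (b' \<circ> g')"
      using sph_map_compose[OF b'c g'] b'k0 by simp
    then obtain g where g: "sph_map n T x0 g"
      and hg: "rel_homotopic n T' (h x0) (h \<circ> g) (b' \<circ> g')"
      using bij unfolding pin_bij_def by blast
    have "rel_homotopic n U' (b (h x0)) (b \<circ> (h \<circ> g)) (b \<circ> (b' \<circ> g'))"
      by (rule rel_homotopic_compose[OF bc hg])
    then have "rel_homotopic n U' (k (a x0)) (k \<circ> (a \<circ> g)) g'"
      unfolding comm[OF x0]
      by (rule rel_homotopic_cong)
         (use comm b'b sph_map_in_topspace[OF g] sph_map_in_topspace[OF g'] in auto)
    then show "\<exists>g. sph_map n U (a x0) g \<and> rel_homotopic n U' (k (a x0)) (k \<circ> g) g'"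
      using sph_map_compose[OF ac g] by blast
  next
    fix g1 g2 assume g1: "sph_map n U (a x0) g1" and g2: "sph_map n U (a x0) g2"
      and H: "rel_homotopic n U' (k (a x0)) (k \<circ> g1) (k \<circ> g2)"
    have "rel_homotopic n T' (b' (k (a x0))) (b' \<circ> (k \<circ> g1)) (b' \<circ> (k \<circ> g2))"
      by (rule rel_homotopic_compose[OF b'c H])
    then have "rel_homotopic n T' (h x0) (h \<circ> (a' \<circ> g1)) (h \<circ> (a' \<circ> g2))"
      unfolding b'k0
      by (rule rel_homotopic_cong)
         (use b'k sph_map_in_topspace[OF g1] sph_map_in_topspace[OF g2] in auto)
    moreover have "sph_map n T x0 (a' \<circ> g1)" "sph_map n T x0 (a' \<circ> g2)"
      using sph_map_compose[OF a'c g1] sph_map_compose[OF a'c g2] a'a0 by simp_all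
    ultimately have "rel_homotopic n T x0 (a' \<circ> g1) (a' \<circ> g2)"
      using bij unfolding pin_bij_def by blast
    then have "rel_homotopic n U (a x0) (a \<circ> (a' \<circ> g1)) (a \<circ> (a' \<circ> g2))"
      by (rule rel_homotopic_compose[OF ac])
    then show "rel_homotopic n U (a x0) g1 g2"
      by (rule rel_homotopic_cong)
         (use a'a sph_map_in_topspace[OF g1] sph_map_in_topspace[OF g2] in auto)
  qed
qed

lemma path_component_of_homeomorphic_maps_iff:
  assumes a: "homeomorphic_maps T U a a'" and "x1 \<in> topspace T" "x2 \<in> topspace T"
  shows "path_component_of U (a x1) (a x2) \<longleftrightarrow> path_component_of T x1 x2"
proof
  assume "path_component_of U (a x1) (a x2)"
  then have "path_component_of T (a' (a x1)) (a' (a x2))"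
    using a by (auto intro: path_component_of_continuous_image simp: homeomorphic_maps_def)
  then show "path_component_of T x1 x2"
    using a assms(2,3) by (simp add: homeomorphic_maps_def)
qed (use a in \<open>auto intro: path_component_of_continuous_image simp: homeomorphic_maps_def\<close>)

lemma pi0_bij_transport:
  assumes a: "homeomorphic_maps T U a a'" and b: "homeomorphic_maps T' U' b b'"
    and h: "continuous_map T T' h" and k: "continuous_map U U' k"
    and comm: "\<And>x. x \<in> topspace T \<Longrightarrow> k (a x) = b (h x)"
    and bij: "pi0_bij T T' h"
  shows "pi0_bij U U' k"
proof -
  have a'T: "a' u \<in> topspace T" and a'a: "a (a' u) = u" if "u \<in> topspace U" for u
    using a that by (auto simp: homeomorphic_maps_def continuous_map_def)
  have b'T: "b' v \<in> topspace T'" and b'b: "b (b' v) = v" if "v \<in> topspace U'" for v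
    using b that by (auto simp: homeomorphic_maps_def continuous_map_def)
  have hT: "h x \<in> topspace T'" if "x \<in> topspace T" for x
    using h that by (auto simp: continuous_map_def)
  have k_eq: "k u = b (h (a' u))" if "u \<in> topspace U" for u
    using comm[OF a'T[OF that]] a'a[OF that] by simp
  have pc_a: "path_component_of U u1 u2 \<longleftrightarrow> path_component_of T (a' u1) (a' u2)"
    if "u1 \<in> topspace U" "u2 \<in> topspace U" for u1 u2
    using path_component_of_homeomorphic_maps_iff[OF a a'T a'T] that by (simp add: a'a)
  have pc_b: "path_component_of U' (b y1) (b y2) \<longleftrightarrow> path_component_of T' y1 y2"
    if "y1 \<in> topspace T'" "y2 \<in> topspace T'" for y1 y2
    by (rule path_component_of_homeomorphic_maps_iff[OF b that])
  show ?thesis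
    unfolding pi0_bij_iff[OF k]
  proof (intro conjI ballI impI)
    fix v assume v: "v \<in> topspace U'"
    then obtain x where x: "x \<in> topspace T" "path_component_of T' (h x) (b' v)"
      using bij b'T unfolding pi0_bij_iff[OF h] by blast
    then have "path_component_of U' (k (a x)) v"
      using pc_b[OF hT b'T[OF v]] comm b'b[OF v] by simp
    moreover have "a x \<in> topspace U"
      using a x(1) by (auto simp: homeomorphic_maps_def continuous_map_def)
    ultimately show "\<exists>u\<in>topspace U. path_component_of U' (k u) v" by blast
  next
    fix u1 u2 assume u: "u1 \<in> topspace U" "u2 \<in> topspace U"
      and "path_component_of U' (k u1) (k u2)"
    then have "path_component_of T' (h (a' u1)) (h (a' u2))"
      using pc_b[OF hT hT] a'T by (simp add: k_eq)
    then show "path_component_of U u1 u2"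
      using bij a'T u pc_a unfolding pi0_bij_iff[OF h] by blast
  qed
qed

lemma weak_homotopy_equiv_transport:
  assumes a: "homeomorphic_maps T U a a'" and b: "homeomorphic_maps T' U' b b'"
    and h: "continuous_map T T' h" and k: "continuous_map U U' k"
    and comm: "\<And>x. x \<in> topspace T \<Longrightarrow> k (a x) = b (h x)"
    and W: "weak_homotopy_equiv T T' h"
  shows "weak_homotopy_equiv U U' k"
proof -
  have "pin_bij n U U' k u0" if "u0 \<in> topspace U" "n \<ge> 1" for n u0
  proof -
    have "a' u0 \<in> topspace T" "u0 = a (a' u0)"
      using a that(1) by (auto simp: homeomorphic_maps_def continuous_map_def)
    then show ?thesis
      using pin_bij_transport[OF a b h k comm] W that(2)
      by (metis weak_homotopy_equiv_def)
  qed
  then show ?thesis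
    using pi0_bij_transport[OF a b h k comm] W by (simp add: weak_homotopy_equiv_def)
qed

lemma weak_homotopy_equiv_conj_iff:
  assumes a: "homeomorphic_maps T U a a'" and b: "homeomorphic_maps T' U' b b'"
    and h: "continuous_map T T' h"
    and comm: "\<And>x. x \<in> topspace T \<Longrightarrow> k (a x) = b (h x)"
  shows "weak_homotopy_equiv U U' k \<longleftrightarrow> weak_homotopy_equiv T T' h"
proof -
  have a'c: "continuous_map U T a'" and a'a: "\<And>u. u \<in> topspace U \<Longrightarrow> a (a' u) = u"
    and bc: "continuous_map T' U' b" and bb': "\<And>y. y \<in> topspace T' \<Longrightarrow> b' (b y) = y"
    using a b by (simp_all add: homeomorphic_maps_def)
  have a'T: "a' u \<in> topspace T" if "u \<in> topspace U" for u
    using a'c that by (auto simp: continuous_map_def)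
  have hT: "h x \<in> topspace T'" if "x \<in> topspace T" for x
    using h that by (auto simp: continuous_map_def)
  have k_eq: "k u = b (h (a' u))" if "u \<in> topspace U" for u
    using comm[OF a'T[OF that]] a'a[OF that] by simp
  have k: "continuous_map U U' k"
    using continuous_map_compose[OF continuous_map_compose[OF a'c h] bc]
    by (rule continuous_map_eq) (simp add: k_eq)
  show ?thesis
  proof
    assume "weak_homotopy_equiv U U' k"
    then show "weak_homotopy_equiv T T' h"
      using weak_homotopy_equiv_transport[OF homeomorphic_maps_sym[THEN iffD1, OF a]
          homeomorphic_maps_sym[THEN iffD1, OF b] k h]
      by (metis a'T bb' hT k_eq)
  qed (rule weak_homotopy_equiv_transport[OF a b h k comm])
qed

section \<open>Filtered mapping spaces\<close>

lemma topspace_CP: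
  "topspace (CP n c X \<phi>X) = {g \<in> extensional (standard_simplex n).
      continuous_map (simplex_top n) X g \<and>
      (\<forall>s\<in>standard_simplex n. \<phi>X (g s) = nerve_strat (push c n s))}"
  by (simp add: CP_def topspace_map_space)

lemma weq_TopP_iff_weak_homotopy_equiv_CP:
  assumes g: "continuous_map X X' g" and over: "\<And>x. x \<in> topspace X \<Longrightarrow> \<phi>X' (g x) = \<phi>X x"
  shows "weq_TopP P X \<phi>X X' \<phi>X' g \<longleftrightarrow>
     (\<forall>n c. nd_simplex P n c \<longrightarrow>
        weak_homotopy_equiv (CP n c X \<phi>X) (CP n c X' \<phi>X') (postcomp (simplex_top n) g))"
proof -
  have "weak_homotopy_equiv (CN P n c X \<phi>X) (CN P n c X' \<phi>X')
          (postcomp (simplex_top n) (\<lambda>(x, t). (g x, t)))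
        \<longleftrightarrow> weak_homotopy_equiv (CP n c X \<phi>X) (CP n c X' \<phi>X') (postcomp (simplex_top n) g)"
    if c: "nd_simplex P n c" for n c
  proof (rule weak_homotopy_equiv_conj_iff)
    show "homeomorphic_maps (CP n c X \<phi>X) (CN P n c X \<phi>X)
        (\<lambda>\<gamma>. restrict (\<lambda>s. (\<gamma> s, push c n s)) (standard_simplex n)) (postcomp (simplex_top n) fst)"
      "homeomorphic_maps (CP n c X' \<phi>X') (CN P n c X' \<phi>X')
        (\<lambda>\<gamma>. restrict (\<lambda>s. (\<gamma> s, push c n s)) (standard_simplex n)) (postcomp (simplex_top n) fst)"
      unfolding CP_def CN_def
      by (rule homeomorphic_maps_map_space_pullback[OF continuous_map_push_nerve_top[OF c]], simp)+
    show "continuous_map (CP n c X \<phi>X) (CP n c X' \<phi>X') (postcomp (simplex_top n) g)"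
      unfolding CP_def
      by (rule continuous_map_postcomp_map_space[OF g, where \<beta> = id]) (simp_all add: over)
    show "postcomp (simplex_top n) (\<lambda>(x, t). (g x, t))
            (restrict (\<lambda>s. (\<gamma> s, push c n s)) (standard_simplex n))
          = restrict (\<lambda>s. (postcomp (simplex_top n) g \<gamma> s, push c n s)) (standard_simplex n)" for \<gamma>
      by (auto simp: postcomp_def)
  qed
  then show ?thesis
    unfolding weq_TopP_def by blast
qed

lemma poset_iso_imp_strict_mono_on: "poset_iso P Q \<alpha> \<Longrightarrow> strict_mono_on P \<alpha>"
  unfolding poset_iso_def bij_betw_def strict_mono_on_def
  by (metis inj_onD less_le)

lemma weak_homotopy_equiv_CP_pullback_iff:
  assumes c: "nd_simplex P n c" and \<alpha>: "strict_mono_on P \<alpha>"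
    and f: "continuous_map X Y f" and over: "\<And>x. x \<in> topspace X \<Longrightarrow> \<phi>Y (f x) = \<alpha> (\<phi>X x)"
  shows "weak_homotopy_equiv (CP n c X \<phi>X) (CP n c (pullback_top Y \<phi>Y (alex P) \<alpha>) snd)
           (postcomp (simplex_top n) (\<lambda>x. (f x, \<phi>X x)))
     \<longleftrightarrow> weak_homotopy_equiv (CP n c X \<phi>X) (CP n (\<alpha> \<circ> c) Y \<phi>Y) (postcomp (simplex_top n) f)"
proof (rule weak_homotopy_equiv_conj_iff)
  have "strict_mono_on (c ` {..n}) \<alpha>"
    using \<alpha> c by (auto simp: strict_mono_on_def nd_simplex_def)
  then have base: "nerve_strat (push (\<alpha> \<circ> c) n s) = \<alpha> (nerve_strat (push c n s))"
    if "s \<in> standard_simplex n" for s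
    using nerve_strat_push_comp[OF nd_simplex_imp_strict_mono_on[OF c] _ that] by blast
  show "homeomorphic_maps (CP n c X \<phi>X) (CP n c X \<phi>X) id id"
    by (simp add: homeomorphic_maps_id)
  show "homeomorphic_maps (CP n (\<alpha> \<circ> c) Y \<phi>Y) (CP n c (pullback_top Y \<phi>Y (alex P) \<alpha>) snd)
      (\<lambda>\<delta>. restrict (\<lambda>s. (\<delta> s, nerve_strat (push c n s))) (standard_simplex n))
      (postcomp (simplex_top n) fst)"
    unfolding CP_def
    by (rule homeomorphic_maps_map_space_pullback[OF continuous_map_nerve_strat_push[OF c]])
       (simp add: base)
  show "continuous_map (CP n c X \<phi>X) (CP n (\<alpha> \<circ> c) Y \<phi>Y) (postcomp (simplex_top n) f)"
    unfolding CP_def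
    by (rule continuous_map_postcomp_map_space[OF f, where \<beta> = \<alpha>]) (simp_all add: over base)
  show "postcomp (simplex_top n) (\<lambda>x. (f x, \<phi>X x)) (id \<gamma>) =
      restrict (\<lambda>s. (postcomp (simplex_top n) f \<gamma> s, nerve_strat (push c n s)))
        (standard_simplex n)"
    if "\<gamma> \<in> topspace (CP n c X \<phi>X)" for \<gamma>
    using that by (auto simp: postcomp_def topspace_CP)
qed

lemma restrict_pointing_in_CP:
  assumes c: "nd_simplex P m c" and d: "face k m d" and \<phi>: "\<phi> \<in> topspace (CP m c X \<phi>X)"
  shows "restrict (\<phi> \<circ> push d k) (standard_simplex k) \<in> topspace (CP k (c \<circ> d) X \<phi>X)"
proof -
  have "continuous_map (simplex_top k) X (\<phi> \<circ> push d k)"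
    using \<phi> continuous_map_compose[OF continuous_map_push_face[OF d]] by (auto simp: topspace_CP)
  then have "continuous_map (simplex_top k) X (restrict (\<phi> \<circ> push d k) (standard_simplex k))"
    by (rule continuous_map_eq) simp
  moreover have "\<phi>X (\<phi> (push d k s)) = nerve_strat (push (c \<circ> d) k s)"
    if "s \<in> standard_simplex k" for s
    using \<phi> push_face_in_standard_simplex[OF d that]
    by (auto simp: topspace_CP push_push_face[OF d])
  ultimately show ?thesis by (simp add: topspace_CP)
qed

text \<open>A basepoint of \<open>C\<^sup>0\<^sub>P(\<parallel>\<Delta>\<^sup>c\<parallel>\<^sub>P, X)\<close> is itself a pointing, namely at the face \<open>id\<close> of \<open>c\<close>.\<close>
lemma spi_iso_iff_weak_homotopy_equiv_CP:
  "spi0_iso P X \<phi>X Y \<phi>Y f \<alpha> \<and> spin_iso P X \<phi>X Y \<phi>Y f \<alpha> \<longleftrightarrow>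
     (\<forall>n c. nd_simplex P n c \<longrightarrow>
        weak_homotopy_equiv (CP n c X \<phi>X) (CP n (\<alpha> \<circ> c) Y \<phi>Y) (postcomp (simplex_top n) f))"
  (is "_ \<longleftrightarrow> (\<forall>n c. _ \<longrightarrow> ?WHE n c)")
proof
  assume iso: "spi0_iso P X \<phi>X Y \<phi>Y f \<alpha> \<and> spin_iso P X \<phi>X Y \<phi>Y f \<alpha>"
  show "\<forall>n c. nd_simplex P n c \<longrightarrow> ?WHE n c"
  proof (intro allI impI)
    fix n c assume c: "nd_simplex P n c"
    have "restrict (x0 \<circ> push id n) (standard_simplex n) = x0"
      if "x0 \<in> topspace (CP n c X \<phi>X)" for x0
      using that by (intro ext) (auto simp: topspace_CP extensional_def push_id)
    moreover have "face n n id" by (simp add: face_def)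
    ultimately show "?WHE n c"
      using iso c unfolding spi0_iso_def spin_iso_def weak_homotopy_equiv_def
      by (metis comp_id topspace_simplex_top)
  qed
next
  assume W: "\<forall>n c. nd_simplex P n c \<longrightarrow> ?WHE n c"
  then have "spin_iso P X \<phi>X Y \<phi>Y f \<alpha>"
    unfolding spin_iso_def weak_homotopy_equiv_def
    using nd_simplex_face restrict_pointing_in_CP by (metis comp_assoc topspace_simplex_top)
  with W show "spi0_iso P X \<phi>X Y \<phi>Y f \<alpha> \<and> spin_iso P X \<phi>X Y \<phi>Y f \<alpha>"
    by (simp add: spi0_iso_def weak_homotopy_equiv_def)
qed

lemma continuous_map_pullback_top_pair:
  assumes "delta_generated X" and f: "continuous_map X T f" and g: "continuous_map X S g"
    and "\<And>x. x \<in> topspace X \<Longrightarrow> \<phi> (f x) = \<psi> (g x)"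
  shows "continuous_map X (pullback_top T \<phi> S \<psi>) (\<lambda>x. (f x, g x))"
proof -
  have "(f x, g x) \<in> {(x, y). x \<in> topspace T \<and> y \<in> topspace S \<and> \<phi> x = \<psi> y}"
    if "x \<in> topspace X" for x
    using assms(4) f g that by (auto simp: continuous_map_def Pi_iff)
  then have "continuous_map X (subtopology (prod_topology T S)
      {(x, y). x \<in> topspace T \<and> y \<in> topspace S \<and> \<phi> x = \<psi> y}) (\<lambda>x. (f x, g x))"
    using f g by (auto simp: continuous_map_in_subtopology continuous_map_paired)
  then show ?thesis
    using continuous_map_dgen_dgen assms(1)
    by (fastforce simp: pullback_top_def delta_generated_def)
qed

theorem lemma3p9:
  fixes X :: "'a topology" and P :: "'p::order set" and \<phi>X :: "'a \<Rightarrow> 'p"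
    and Y :: "'b topology" and Q :: "'q::order set" and \<phi>Y :: "'b \<Rightarrow> 'q"
    and f :: "'a \<Rightarrow> 'b" and \<alpha> :: "'p \<Rightarrow> 'q"
  assumes "stratified X P \<phi>X" and "stratified Y Q \<phi>Y"
    and "stratified_map X P \<phi>X Y Q \<phi>Y f \<alpha>"
    and "poset_iso P Q \<alpha>"
  shows "weq_TopP P X \<phi>X
           (pullback_top Y \<phi>Y (alex P) \<alpha>) snd
           (\<lambda>x. (f x, \<phi>X x))
         \<longleftrightarrow> spi0_iso P X \<phi>X Y \<phi>Y f \<alpha> \<and> spin_iso P X \<phi>X Y \<phi>Y f \<alpha>"
proof -
  have f: "continuous_map X Y f" and over: "\<And>x. x \<in> topspace X \<Longrightarrow> \<phi>Y (f x) = \<alpha> (\<phi>X x)"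
    using assms(3) by (auto simp: stratified_map_def)
  have "continuous_map X (pullback_top Y \<phi>Y (alex P) \<alpha>) (\<lambda>x. (f x, \<phi>X x))"
    using assms(1) by (intro continuous_map_pullback_top_pair f over) (auto simp: stratified_def)
  moreover have "weak_homotopy_equiv (CP n c X \<phi>X) (CP n c (pullback_top Y \<phi>Y (alex P) \<alpha>) snd)
        (postcomp (simplex_top n) (\<lambda>x. (f x, \<phi>X x)))
      \<longleftrightarrow> weak_homotopy_equiv (CP n c X \<phi>X) (CP n (\<alpha> \<circ> c) Y \<phi>Y) (postcomp (simplex_top n) f)"
    if "nd_simplex P n c" for n c
    using that poset_iso_imp_strict_mono_on[OF assms(4)] f over
    by (rule weak_homotopy_equiv_CP_pullback_iff)
  ultimately have "weq_TopP P X \<phi>X (pullback_top Y \<phi>Y (alex P) \<alpha>) snd (\<lambda>x. (f x, \<phi>X x)) \<longleftrightarrow>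
      (\<forall>n c. nd_simplex P n c \<longrightarrow>
         weak_homotopy_equiv (CP n c X \<phi>X) (CP n (\<alpha> \<circ> c) Y \<phi>Y) (postcomp (simplex_top n) f))"
    by (simp add: weq_TopP_iff_weak_homotopy_equiv_CP)
  then show ?thesis
    by (simp add: spi_iso_iff_weak_homotopy_equiv_CP)
qed

end
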